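(* Let $\mathscr{A}$ be a strict monoidal category and $\mathscr{B}$ a strict braided monoidal category with braiding $c$. Let $\mathrm{Frob}(\mathscr{A},\mathscr{B})$ be the category whose objects are Frobenius monoidal functors $\mathscr{A}\to\mathscr{B}$ and whose morphisms are all natural transformations between them. For $F,G$ in $\mathrm{Frob}(\mathscr{A},\mathscr{B})$, let $(F\otimes G)A=FA\otimes GA$, with monoidal structure $r=(r^F_{A,B}\otimes r^G_{A,B})(1\otimes c^{-1}_{FB,GA}\otimes 1)$, $r_0=r^F_0\otimes r^G_0$, and comonoidal structure $i=(1\otimes c_{FB,GA}\otimes 1)(i^F_{A,B}\otimes i^G_{A,B})$, $i_0=i^F_0\otimes i^G_0$. Then $F\otimes G$ is a Frobenius monoidal functor, and with this pointwise tensor product, unit the constant functor at $I$, and braiding $(c_{F,G})_A=c_{FA,GA}$, $\mathrm{Frob}(\mathscr{A},\mathscr{B})$ is a braided monoidal category.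
   Context: A Frobenius monoidal functor is a functor $F$ that is monoidal $(F,r,r_0)$ (with $r_{A,B}:FA\otimes FB\to F(A\otimes B)$, $r_0:I\to FI$) and comonoidal $(F,i,i_0)$ (with $i_{A,B}:F(A\otimes B)\to FA\otimes FB$, $i_0:FI\to I$), such that for all objects $A,B,C$: $i_{A,B\otimes C}\circ r_{A\otimes B,C} = (1\otimes r_{B,C})\circ(i_{A,B}\otimes 1)$ and $i_{A\otimes B,C}\circ r_{A,B\otimes C} = (r_{A,B}\otimes 1)\circ(1\otimes i_{B,C})$. *)

theory Defs
  imports Main
begin

record ('o,'m) cat =
  Ob  :: "'o set"
  Ar  :: "'m set"
  Dm  :: "'m \<Rightarrow> 'o"
  Cd  :: "'m \<Rightarrow> 'o"
  Idn :: "'o \<Rightarrow> 'm"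
  Cmp :: "'m \<Rightarrow> 'm \<Rightarrow> 'm"   (* Cmp C g f = g \<circ> f, defined when Cd f = Dm g *)

record ('o,'m) moncat = "('o,'m) cat" +
  Tob :: "'o \<Rightarrow> 'o \<Rightarrow> 'o"
  Tar :: "'m \<Rightarrow> 'm \<Rightarrow> 'm"
  Unt  :: "'o"
  Asc :: "'o \<Rightarrow> 'o \<Rightarrow> 'o \<Rightarrow> 'm"   (* associator (A\<otimes>B)\<otimes>C \<rightarrow> A\<otimes>(B\<otimes>C) *)
  Lu  :: "'o \<Rightarrow> 'm"               (* left unitor I\<otimes>A \<rightarrow> A *)
  Ru  :: "'o \<Rightarrow> 'm"               (* right unitor A\<otimes>I \<rightarrow> A *)

record ('o,'m) bmoncat = "('o,'m) moncat" +
  Brd :: "'o \<Rightarrow> 'o \<Rightarrow> 'm"         (* braiding A\<otimes>B \<rightarrow> B\<otimes>A *)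

definition category :: "('o,'m,'z) cat_scheme \<Rightarrow> bool" where
  "category C \<longleftrightarrow>
     (\<forall>f\<in>Ar C. Dm C f \<in> Ob C \<and> Cd C f \<in> Ob C) \<and>
     (\<forall>X\<in>Ob C. Idn C X \<in> Ar C \<and> Dm C (Idn C X) = X \<and> Cd C (Idn C X) = X) \<and>
     (\<forall>f\<in>Ar C. \<forall>g\<in>Ar C. Cd C f = Dm C g \<longrightarrow>
        Cmp C g f \<in> Ar C \<and> Dm C (Cmp C g f) = Dm C f \<and> Cd C (Cmp C g f) = Cd C g) \<and>
     (\<forall>f\<in>Ar C. Cmp C (Idn C (Cd C f)) f = f \<and> Cmp C f (Idn C (Dm C f)) = f) \<and>
     (\<forall>f\<in>Ar C. \<forall>g\<in>Ar C. \<forall>h\<in>Ar C. Cd C f = Dm C g \<longrightarrow> Cd C g = Dm C h \<longrightarrow>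
        Cmp C h (Cmp C g f) = Cmp C (Cmp C h g) f)"

definition hom :: "('o,'m,'z) cat_scheme \<Rightarrow> 'm \<Rightarrow> 'o \<Rightarrow> 'o \<Rightarrow> bool" where
  "hom C f X Y \<longleftrightarrow> f \<in> Ar C \<and> Dm C f = X \<and> Cd C f = Y"

definition is_inverse :: "('o,'m,'z) cat_scheme \<Rightarrow> 'm \<Rightarrow> 'm \<Rightarrow> bool" where
  "is_inverse C f g \<longleftrightarrow> g \<in> Ar C \<and> Dm C g = Cd C f \<and> Cd C g = Dm C f \<and>
     Cmp C g f = Idn C (Dm C f) \<and> Cmp C f g = Idn C (Cd C f)"

definition iso :: "('o,'m,'z) cat_scheme \<Rightarrow> 'm \<Rightarrow> bool" where
  "iso C f \<longleftrightarrow> f \<in> Ar C \<and> (\<exists>g. is_inverse C f g)"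

definition cinv :: "('o,'m,'z) cat_scheme \<Rightarrow> 'm \<Rightarrow> 'm" where
  "cinv C f = (THE g. is_inverse C f g)"

definition monoidal_category :: "('o,'m,'z) moncat_scheme \<Rightarrow> bool" where
  "monoidal_category C \<longleftrightarrow>
     category C \<and> Unt C \<in> Ob C \<and>
     (\<forall>X\<in>Ob C. \<forall>Y\<in>Ob C. Tob C X Y \<in> Ob C) \<and>
     (\<forall>f\<in>Ar C. \<forall>g\<in>Ar C. hom C (Tar C f g) (Tob C (Dm C f) (Dm C g)) (Tob C (Cd C f) (Cd C g))) \<and>
     (\<forall>X\<in>Ob C. \<forall>Y\<in>Ob C. Tar C (Idn C X) (Idn C Y) = Idn C (Tob C X Y)) \<and>
     (\<forall>f\<in>Ar C. \<forall>g\<in>Ar C. \<forall>f'\<in>Ar C. \<forall>g'\<in>Ar C. Cd C f = Dm C g \<longrightarrow> Cd C f' = Dm C g' \<longrightarrow>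
        Tar C (Cmp C g f) (Cmp C g' f') = Cmp C (Tar C g g') (Tar C f f')) \<and>
     (\<forall>X\<in>Ob C. \<forall>Y\<in>Ob C. \<forall>Z\<in>Ob C. iso C (Asc C X Y Z) \<and>
        hom C (Asc C X Y Z) (Tob C (Tob C X Y) Z) (Tob C X (Tob C Y Z))) \<and>
     (\<forall>X\<in>Ob C. iso C (Lu C X) \<and> hom C (Lu C X) (Tob C (Unt C) X) X \<and>
        iso C (Ru C X) \<and> hom C (Ru C X) (Tob C X (Unt C)) X) \<and>
     (\<forall>f\<in>Ar C. \<forall>g\<in>Ar C. \<forall>h\<in>Ar C.
        Cmp C (Asc C (Cd C f) (Cd C g) (Cd C h)) (Tar C (Tar C f g) h) =
        Cmp C (Tar C f (Tar C g h)) (Asc C (Dm C f) (Dm C g) (Dm C h))) \<and>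
     (\<forall>f\<in>Ar C. Cmp C (Lu C (Cd C f)) (Tar C (Idn C (Unt C)) f) = Cmp C f (Lu C (Dm C f)) \<and>
        Cmp C (Ru C (Cd C f)) (Tar C f (Idn C (Unt C))) = Cmp C f (Ru C (Dm C f))) \<and>
     (\<forall>W\<in>Ob C. \<forall>X\<in>Ob C. \<forall>Y\<in>Ob C. \<forall>Z\<in>Ob C.
        Cmp C (Asc C W X (Tob C Y Z)) (Asc C (Tob C W X) Y Z) =
        Cmp C (Tar C (Idn C W) (Asc C X Y Z))
          (Cmp C (Asc C W (Tob C X Y) Z) (Tar C (Asc C W X Y) (Idn C Z)))) \<and>
     (\<forall>X\<in>Ob C. \<forall>Y\<in>Ob C.
        Cmp C (Tar C (Idn C X) (Lu C Y)) (Asc C X (Unt C) Y) = Tar C (Ru C X) (Idn C Y))"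

definition strict_monoidal_category :: "('o,'m,'z) moncat_scheme \<Rightarrow> bool" where
  "strict_monoidal_category C \<longleftrightarrow> monoidal_category C \<and>
     (\<forall>X\<in>Ob C. \<forall>Y\<in>Ob C. \<forall>Z\<in>Ob C. Tob C (Tob C X Y) Z = Tob C X (Tob C Y Z) \<and>
        Asc C X Y Z = Idn C (Tob C X (Tob C Y Z))) \<and>
     (\<forall>X\<in>Ob C. Tob C (Unt C) X = X \<and> Tob C X (Unt C) = X \<and> Lu C X = Idn C X \<and> Ru C X = Idn C X) \<and>
     (\<forall>f\<in>Ar C. \<forall>g\<in>Ar C. \<forall>h\<in>Ar C. Tar C (Tar C f g) h = Tar C f (Tar C g h)) \<and>
     (\<forall>f\<in>Ar C. Tar C (Idn C (Unt C)) f = f \<and> Tar C f (Idn C (Unt C)) = f)"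

definition braided_monoidal_category :: "('o,'m,'z) bmoncat_scheme \<Rightarrow> bool" where
  "braided_monoidal_category C \<longleftrightarrow> monoidal_category C \<and>
     (\<forall>X\<in>Ob C. \<forall>Y\<in>Ob C. iso C (Brd C X Y) \<and> hom C (Brd C X Y) (Tob C X Y) (Tob C Y X)) \<and>
     (\<forall>f\<in>Ar C. \<forall>g\<in>Ar C.
        Cmp C (Brd C (Cd C f) (Cd C g)) (Tar C f g) = Cmp C (Tar C g f) (Brd C (Dm C f) (Dm C g))) \<and>
     (\<forall>X\<in>Ob C. \<forall>Y\<in>Ob C. \<forall>Z\<in>Ob C.
        Cmp C (Asc C Y Z X) (Cmp C (Brd C X (Tob C Y Z)) (Asc C X Y Z)) =
        Cmp C (Tar C (Idn C Y) (Brd C X Z)) (Cmp C (Asc C Y X Z) (Tar C (Brd C X Y) (Idn C Z)))) \<and>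
     (\<forall>X\<in>Ob C. \<forall>Y\<in>Ob C. \<forall>Z\<in>Ob C.
        Cmp C (cinv C (Asc C Z X Y)) (Cmp C (Brd C (Tob C X Y) Z) (cinv C (Asc C X Y Z))) =
        Cmp C (Tar C (Brd C X Z) (Idn C Y))
          (Cmp C (cinv C (Asc C X Z Y)) (Tar C (Idn C X) (Brd C Y Z))))"

definition strict_braided_monoidal_category :: "('o,'m,'z) bmoncat_scheme \<Rightarrow> bool" where
  "strict_braided_monoidal_category C \<longleftrightarrow>
     braided_monoidal_category C \<and> strict_monoidal_category C"

datatype ('ao,'am,'bo,'bm) ffun = FF
  (FO: "'ao \<Rightarrow> 'bo")
  (FM: "'am \<Rightarrow> 'bm")
  (Fr: "'ao \<Rightarrow> 'ao \<Rightarrow> 'bm")  (* r_{A,B} : FA \<otimes> FB \<rightarrow> F(A\<otimes>B) *)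
  (Fr0: "'bm")               (* r_0 : I \<rightarrow> FI *)
  (Fi: "'ao \<Rightarrow> 'ao \<Rightarrow> 'bm")  (* i_{A,B} : F(A\<otimes>B) \<rightarrow> FA \<otimes> FB *)
  (Fi0: "'bm")               (* i_0 : FI \<rightarrow> I *)

definition is_functor :: "('ao,'am,'z1) cat_scheme \<Rightarrow> ('bo,'bm,'z2) cat_scheme
    \<Rightarrow> ('ao \<Rightarrow> 'bo) \<Rightarrow> ('am \<Rightarrow> 'bm) \<Rightarrow> bool" where
  "is_functor A B Fo Fm \<longleftrightarrow>
     (\<forall>X\<in>Ob A. Fo X \<in> Ob B) \<and>
     (\<forall>f\<in>Ar A. hom B (Fm f) (Fo (Dm A f)) (Fo (Cd A f))) \<and>
     (\<forall>X\<in>Ob A. Fm (Idn A X) = Idn B (Fo X)) \<and>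
     (\<forall>f\<in>Ar A. \<forall>g\<in>Ar A. Cd A f = Dm A g \<longrightarrow> Fm (Cmp A g f) = Cmp B (Fm g) (Fm f))"

text \<open>Monoidal (lax) and comonoidal (oplax) functor axioms, written for strict monoidal
  source and target (so no associators/unitors appear).\<close>

definition monoidal_functor :: "('ao,'am,'z1) moncat_scheme \<Rightarrow> ('bo,'bm,'z2) moncat_scheme
    \<Rightarrow> ('ao,'am,'bo,'bm) ffun \<Rightarrow> bool" where
  "monoidal_functor A B F \<longleftrightarrow> is_functor A B (FO F) (FM F) \<and>
     (\<forall>X\<in>Ob A. \<forall>Y\<in>Ob A. hom B (Fr F X Y) (Tob B (FO F X) (FO F Y)) (FO F (Tob A X Y))) \<and>
     hom B (Fr0 F) (Unt B) (FO F (Unt A)) \<and>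
     (\<forall>f\<in>Ar A. \<forall>g\<in>Ar A.
        Cmp B (Fr F (Cd A f) (Cd A g)) (Tar B (FM F f) (FM F g)) =
        Cmp B (FM F (Tar A f g)) (Fr F (Dm A f) (Dm A g))) \<and>
     (\<forall>X\<in>Ob A. \<forall>Y\<in>Ob A. \<forall>Z\<in>Ob A.
        Cmp B (Fr F (Tob A X Y) Z) (Tar B (Fr F X Y) (Idn B (FO F Z))) =
        Cmp B (Fr F X (Tob A Y Z)) (Tar B (Idn B (FO F X)) (Fr F Y Z))) \<and>
     (\<forall>X\<in>Ob A. Cmp B (Fr F (Unt A) X) (Tar B (Fr0 F) (Idn B (FO F X))) = Idn B (FO F X) \<and>
        Cmp B (Fr F X (Unt A)) (Tar B (Idn B (FO F X)) (Fr0 F)) = Idn B (FO F X))"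

definition comonoidal_functor :: "('ao,'am,'z1) moncat_scheme \<Rightarrow> ('bo,'bm,'z2) moncat_scheme
    \<Rightarrow> ('ao,'am,'bo,'bm) ffun \<Rightarrow> bool" where
  "comonoidal_functor A B F \<longleftrightarrow> is_functor A B (FO F) (FM F) \<and>
     (\<forall>X\<in>Ob A. \<forall>Y\<in>Ob A. hom B (Fi F X Y) (FO F (Tob A X Y)) (Tob B (FO F X) (FO F Y))) \<and>
     hom B (Fi0 F) (FO F (Unt A)) (Unt B) \<and>
     (\<forall>f\<in>Ar A. \<forall>g\<in>Ar A.
        Cmp B (Tar B (FM F f) (FM F g)) (Fi F (Dm A f) (Dm A g)) =
        Cmp B (Fi F (Cd A f) (Cd A g)) (FM F (Tar A f g))) \<and>
     (\<forall>X\<in>Ob A. \<forall>Y\<in>Ob A. \<forall>Z\<in>Ob A.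
        Cmp B (Tar B (Fi F X Y) (Idn B (FO F Z))) (Fi F (Tob A X Y) Z) =
        Cmp B (Tar B (Idn B (FO F X)) (Fi F Y Z)) (Fi F X (Tob A Y Z))) \<and>
     (\<forall>X\<in>Ob A. Cmp B (Tar B (Fi0 F) (Idn B (FO F X))) (Fi F (Unt A) X) = Idn B (FO F X) \<and>
        Cmp B (Tar B (Idn B (FO F X)) (Fi0 F)) (Fi F X (Unt A)) = Idn B (FO F X))"

definition frobenius_monoidal_functor :: "('ao,'am,'z1) moncat_scheme \<Rightarrow> ('bo,'bm,'z2) moncat_scheme
    \<Rightarrow> ('ao,'am,'bo,'bm) ffun \<Rightarrow> bool" where
  "frobenius_monoidal_functor A B F \<longleftrightarrow> monoidal_functor A B F \<and> comonoidal_functor A B F \<and>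
     (\<forall>X\<in>Ob A. \<forall>Y\<in>Ob A. \<forall>Z\<in>Ob A.
        Cmp B (Fi F X (Tob A Y Z)) (Fr F (Tob A X Y) Z) =
        Cmp B (Tar B (Idn B (FO F X)) (Fr F Y Z)) (Tar B (Fi F X Y) (Idn B (FO F Z))) \<and>
        Cmp B (Fi F (Tob A X Y) Z) (Fr F X (Tob A Y Z)) =
        Cmp B (Tar B (Fr F X Y) (Idn B (FO F Z))) (Tar B (Idn B (FO F X)) (Fi F Y Z)))"

text \<open>Natural transformations F \<Rightarrow> G, with components extensional (undefined off objects).\<close>

definition nat_trans :: "('ao,'am,'z1) cat_scheme \<Rightarrow> ('bo,'bm,'z2) cat_scheme
    \<Rightarrow> ('ao,'am,'bo,'bm) ffun \<Rightarrow> ('ao,'am,'bo,'bm) ffun \<Rightarrow> ('ao \<Rightarrow> 'bm) \<Rightarrow> bool" where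
  "nat_trans A B F G \<eta> \<longleftrightarrow>
     (\<forall>X\<in>Ob A. hom B (\<eta> X) (FO F X) (FO G X)) \<and>
     (\<forall>X. X \<notin> Ob A \<longrightarrow> \<eta> X = undefined) \<and>
     (\<forall>f\<in>Ar A. Cmp B (FM G f) (\<eta> (Dm A f)) = Cmp B (\<eta> (Cd A f)) (FM F f))"

definition frob_tensor :: "('bo,'bm,'z) bmoncat_scheme
    \<Rightarrow> ('ao,'am,'bo,'bm) ffun \<Rightarrow> ('ao,'am,'bo,'bm) ffun \<Rightarrow> ('ao,'am,'bo,'bm) ffun" where
  "frob_tensor B F G = FF
     (\<lambda>X. Tob B (FO F X) (FO G X))
     (\<lambda>f. Tar B (FM F f) (FM G f))
     (\<lambda>X Y. Cmp B (Tar B (Fr F X Y) (Fr G X Y))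
        (Tar B (Tar B (Idn B (FO F X)) (cinv B (Brd B (FO F Y) (FO G X)))) (Idn B (FO G Y))))
     (Tar B (Fr0 F) (Fr0 G))
     (\<lambda>X Y. Cmp B (Tar B (Tar B (Idn B (FO F X)) (Brd B (FO F Y) (FO G X))) (Idn B (FO G Y)))
        (Tar B (Fi F X Y) (Fi G X Y)))
     (Tar B (Fi0 F) (Fi0 G))"

definition frob_unit :: "('bo,'bm,'z) bmoncat_scheme \<Rightarrow> ('ao,'am,'bo,'bm) ffun" where
  "frob_unit B = FF (\<lambda>_. Unt B) (\<lambda>_. Idn B (Unt B)) (\<lambda>_ _. Idn B (Unt B)) (Idn B (Unt B))
     (\<lambda>_ _. Idn B (Unt B)) (Idn B (Unt B))"

type_synonym ('ao,'am,'bo,'bm) frob_arr =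
  "('ao,'am,'bo,'bm) ffun \<times> ('ao,'am,'bo,'bm) ffun \<times> ('ao \<Rightarrow> 'bm)"

definition FrobCat :: "('ao,'am) moncat \<Rightarrow> ('bo,'bm) bmoncat
    \<Rightarrow> (('ao,'am,'bo,'bm) ffun, ('ao,'am,'bo,'bm) frob_arr) bmoncat" where
  "FrobCat A B =
    \<lparr> Ob = {F. frobenius_monoidal_functor A B F},
      Ar = {(F, G, \<eta>). frobenius_monoidal_functor A B F \<and> frobenius_monoidal_functor A B G \<and>
                       nat_trans A B F G \<eta>},
      Dm = (\<lambda>(F, G, \<eta>). F),
      Cd = (\<lambda>(F, G, \<eta>). G),
      Idn = (\<lambda>F. (F, F, \<lambda>X. if X \<in> Ob A then Idn B (FO F X) else undefined)),
      Cmp = (\<lambda>(G, H, \<theta>) (F, G', \<eta>). (F, H, \<lambda>X. if X \<in> Ob A then Cmp B (\<theta> X) (\<eta> X) else undefined)),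
      Tob = frob_tensor B,
      Tar = (\<lambda>(F, G, \<eta>) (F', G', \<eta>'). (frob_tensor B F F', frob_tensor B G G',
               \<lambda>X. if X \<in> Ob A then Tar B (\<eta> X) (\<eta>' X) else undefined)),
      Unt = frob_unit B,
      Asc = (\<lambda>F G H. (frob_tensor B (frob_tensor B F G) H, frob_tensor B F (frob_tensor B G H),
               \<lambda>X. if X \<in> Ob A then Idn B (Tob B (FO F X) (Tob B (FO G X) (FO H X))) else undefined)),
      Lu = (\<lambda>F. (frob_tensor B (frob_unit B) F, F,
               \<lambda>X. if X \<in> Ob A then Idn B (FO F X) else undefined)),
      Ru = (\<lambda>F. (frob_tensor B F (frob_unit B), F,
               \<lambda>X. if X \<in> Ob A then Idn B (FO F X) else undefined)),
      Brd = (\<lambda>F G. (frob_tensor B F G, frob_tensor B G F,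
               \<lambda>X. if X \<in> Ob A then Brd B (FO F X) (FO G X) else undefined)) \<rparr>"

end

theory Submission
  imports Defs
begin

text \<open>The structure maps of \<open>F \<otimes> G\<close> are those of \<open>F\<close> and \<open>G\<close>, tensored and conjugated by the
  middle interchange \<open>m = 1 \<otimes> c \<otimes> 1 : (FA \<otimes> FB) \<otimes> (GA \<otimes> GB) \<rightarrow> (FA \<otimes> GA) \<otimes> (FB \<otimes> GB)\<close>.
  Naturality of the braiding makes \<open>m\<close> natural, and the hexagon identities make it coherent: it is
  associative, trivial on the unit, and satisfies two mixed identities between \<open>m\<close> and \<open>m\<^sup>-\<^sup>1\<close>
  shaped like the Frobenius conditions. Each axiom for \<open>F \<otimes> G\<close> is therefore the tensor product of
  the corresponding axioms for \<open>F\<close> and \<open>G\<close>, moved past \<open>m\<close>. As \<open>B\<close> is strict, the associator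
  and unitors of \<open>Frob(A, B)\<close> have identity components, so its coherence laws hold componentwise
  and the hexagons reduce to those of \<open>B\<close>.\<close>

lemma is_inverse_unique:
  assumes C: "category C" and f: "f \<in> Ar C" and g: "is_inverse C f g" and h: "is_inverse C f h"
  shows "g = h"
proof -
  have assoc: "\<forall>f\<in>Ar C. \<forall>g\<in>Ar C. \<forall>h\<in>Ar C. Cd C f = Dm C g \<longrightarrow> Cd C g = Dm C h \<longrightarrow>
        Cmp C h (Cmp C g f) = Cmp C (Cmp C h g) f"
   and unit: "\<forall>f\<in>Ar C. Cmp C (Idn C (Cd C f)) f = f \<and> Cmp C f (Idn C (Dm C f)) = f"
    using C unfolding category_def by blast+
  have g': "g \<in> Ar C" "Dm C g = Cd C f" "Cd C g = Dm C f" "Cmp C g f = Idn C (Dm C f)"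
    using g unfolding is_inverse_def by auto
  have h': "h \<in> Ar C" "Dm C h = Cd C f" "Cd C h = Dm C f" "Cmp C f h = Idn C (Cd C f)"
    using h unfolding is_inverse_def by auto
  have "g = Cmp C g (Cmp C f h)" using unit g' h' by auto
  also have "\<dots> = Cmp C (Cmp C g f) h" using assoc[rule_format, of h f g] g' h' f by simp
  also have "\<dots> = h" using unit g' h' by auto
  finally show ?thesis .
qed

lemma cinv_eqI:
  assumes "category C" "f \<in> Ar C" "is_inverse C f g"
  shows "cinv C f = g"
  unfolding cinv_def using is_inverse_unique[OF assms(1,2)] assms(3) by blast

lemma is_inverse_cinv:
  assumes "category C" "iso C f"
  shows "is_inverse C f (cinv C f)"
proof -
  obtain g where "f \<in> Ar C" "is_inverse C f g" using assms(2) unfolding iso_def by blast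
  then show ?thesis using cinv_eqI[OF assms(1)] by simp
qed

locale strict_braided =
  fixes B :: "('o,'m) bmoncat"
  assumes strict_braided: "strict_braided_monoidal_category B"
begin

abbreviation ar where "ar f \<equiv> f \<in> Ar B"
abbreviation ob where "ob X \<equiv> X \<in> Ob B"
abbreviation dm where "dm f \<equiv> Dm B f"
abbreviation cd where "cd f \<equiv> Cd B f"
abbreviation idn ("\<iota>") where "\<iota> X \<equiv> Idn B X"
abbreviation cmp (infixr "\<cdot>" 55) where "g \<cdot> f \<equiv> Cmp B g f"
abbreviation tar (infixr "\<otimes>" 70) where "f \<otimes> g \<equiv> Tar B f g"
abbreviation tob (infixr "\<odot>" 70) where "X \<odot> Y \<equiv> Tob B X Y"
abbreviation unt ("\<one>") where "\<one> \<equiv> Unt B"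
abbreviation brd ("\<sigma>") where "\<sigma> X Y \<equiv> Brd B X Y"
abbreviation brdi ("\<tau>") where "\<tau> X Y \<equiv> cinv B (Brd B X Y)"

lemma braided: "braided_monoidal_category B"
  and strict: "strict_monoidal_category B"
  using strict_braided unfolding strict_braided_monoidal_category_def by simp_all

lemma monoidal: "monoidal_category B"
  using strict unfolding strict_monoidal_category_def by simp

lemma category: "category B"
  using monoidal unfolding monoidal_category_def by simp

lemma ob_Dm[simp]: "ar f \<Longrightarrow> ob (dm f)"
  and ob_Cd[simp]: "ar f \<Longrightarrow> ob (cd f)"
  and ar_Idn[simp]: "ob X \<Longrightarrow> ar (\<iota> X)"
  and Dm_Idn[simp]: "ob X \<Longrightarrow> dm (\<iota> X) = X"
  and Cd_Idn[simp]: "ob X \<Longrightarrow> cd (\<iota> X) = X"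
  and ar_Cmp[simp]: "ar f \<Longrightarrow> ar g \<Longrightarrow> cd f = dm g \<Longrightarrow> ar (g \<cdot> f)"
  and Dm_Cmp[simp]: "ar f \<Longrightarrow> ar g \<Longrightarrow> cd f = dm g \<Longrightarrow> dm (g \<cdot> f) = dm f"
  and Cd_Cmp[simp]: "ar f \<Longrightarrow> ar g \<Longrightarrow> cd f = dm g \<Longrightarrow> cd (g \<cdot> f) = cd g"
  and Idn_comp[simp]: "ar f \<Longrightarrow> cd f = X \<Longrightarrow> \<iota> X \<cdot> f = f"
  and comp_Idn[simp]: "ar f \<Longrightarrow> dm f = X \<Longrightarrow> f \<cdot> \<iota> X = f"
  using category unfolding category_def by auto

lemma comp_assoc: "ar f \<Longrightarrow> ar g \<Longrightarrow> ar h \<Longrightarrow> cd f = dm g \<Longrightarrow> cd g = dm h \<Longrightarrow>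
     (h \<cdot> g) \<cdot> f = h \<cdot> (g \<cdot> f)"
  using category unfolding category_def by simp

lemma ob_Unt[simp]: "ob \<one>"
  and ob_Tob[simp]: "ob X \<Longrightarrow> ob Y \<Longrightarrow> ob (X \<odot> Y)"
  and ar_Tar[simp]: "ar f \<Longrightarrow> ar g \<Longrightarrow> ar (f \<otimes> g)"
  and Dm_Tar[simp]: "ar f \<Longrightarrow> ar g \<Longrightarrow> dm (f \<otimes> g) = dm f \<odot> dm g"
  and Cd_Tar[simp]: "ar f \<Longrightarrow> ar g \<Longrightarrow> cd (f \<otimes> g) = cd f \<odot> cd g"
  and Tar_Idn: "ob X \<Longrightarrow> ob Y \<Longrightarrow> \<iota> X \<otimes> \<iota> Y = \<iota> (X \<odot> Y)"
  and interchange: "ar f \<Longrightarrow> ar g \<Longrightarrow> ar f' \<Longrightarrow> ar g' \<Longrightarrow> cd f = dm g \<Longrightarrow> cd f' = dm g' \<Longrightarrow>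
     (g \<cdot> f) \<otimes> (g' \<cdot> f') = (g \<otimes> g') \<cdot> (f \<otimes> f')"
  using monoidal unfolding monoidal_category_def hom_def by simp_all

lemma Tob_assoc[simp]: "ob X \<Longrightarrow> ob Y \<Longrightarrow> ob Z \<Longrightarrow> (X \<odot> Y) \<odot> Z = X \<odot> (Y \<odot> Z)"
  and Tob_Unt[simp]: "ob X \<Longrightarrow> \<one> \<odot> X = X" "ob X \<Longrightarrow> X \<odot> \<one> = X"
  and Asc_eq_Idn: "ob X \<Longrightarrow> ob Y \<Longrightarrow> ob Z \<Longrightarrow> Asc B X Y Z = \<iota> (X \<odot> Y \<odot> Z)"
  and Tar_assoc: "ar f \<Longrightarrow> ar g \<Longrightarrow> ar h \<Longrightarrow> (f \<otimes> g) \<otimes> h = f \<otimes> (g \<otimes> h)"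
  and Tar_Idn_Unt: "ar f \<Longrightarrow> \<iota> \<one> \<otimes> f = f" "ar f \<Longrightarrow> f \<otimes> \<iota> \<one> = f"
  using strict unfolding strict_monoidal_category_def by simp_all

lemma comp_eq_extend:
  "a \<cdot> b = c \<cdot> d \<Longrightarrow> ar a \<Longrightarrow> ar b \<Longrightarrow> ar c \<Longrightarrow> ar d \<Longrightarrow> ar e \<Longrightarrow>
   cd b = dm a \<Longrightarrow> cd d = dm c \<Longrightarrow> cd e = dm b \<Longrightarrow> cd e = dm d \<Longrightarrow> a \<cdot> (b \<cdot> e) = c \<cdot> (d \<cdot> e)"
  by (metis comp_assoc)

lemma comp_eq_extend1:
  "a \<cdot> b = c \<Longrightarrow> ar a \<Longrightarrow> ar b \<Longrightarrow> ar e \<Longrightarrow> cd b = dm a \<Longrightarrow> cd e = dm b \<Longrightarrow> a \<cdot> (b \<cdot> e) = c \<cdot> e"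
  by (metis comp_assoc)

lemma homD: "hom B f X Y \<Longrightarrow> ar f \<and> dm f = X \<and> cd f = Y \<and> ob X \<and> ob Y"
  by (auto simp: hom_def)

lemma is_inverse_Idn: "ob X \<Longrightarrow> is_inverse B (\<iota> X) (\<iota> X)"
  by (simp add: is_inverse_def)

lemma is_inverse_comp:
  assumes f: "is_inverse B f f'" "ar f" and g: "is_inverse B g g'" "ar g" and fg: "cd f = dm g"
  shows "is_inverse B (g \<cdot> f) (f' \<cdot> g')"
proof -
  have f': "ar f'" "dm f' = cd f" "cd f' = dm f" "f' \<cdot> f = \<iota> (dm f)" "f \<cdot> f' = \<iota> (cd f)"
    and g': "ar g'" "dm g' = cd g" "cd g' = dm g" "g' \<cdot> g = \<iota> (dm g)" "g \<cdot> g' = \<iota> (cd g)"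
    using f g unfolding is_inverse_def by auto
  have "f' \<cdot> g' \<cdot> g \<cdot> f = \<iota> (dm f)"
    using f' g' f(2) g(2) fg by (simp add: comp_eq_extend1[of g' g])
  moreover have "g \<cdot> f \<cdot> f' \<cdot> g' = \<iota> (cd g)"
    using f' g' f(2) g(2) fg by (simp add: comp_eq_extend1[of f f'])
  ultimately show ?thesis using f' g' f(2) g(2) fg unfolding is_inverse_def by (simp add: comp_assoc)
qed

lemma is_inverse_Tar:
  assumes "is_inverse B f f'" "is_inverse B g g'" "ar f" "ar g"
  shows "is_inverse B (f \<otimes> g) (f' \<otimes> g')"
  using assms unfolding is_inverse_def by (simp add: interchange[symmetric] Tar_Idn)

lemma cinv_Idn: "ob X \<Longrightarrow> cinv B (\<iota> X) = \<iota> X"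
  by (rule cinv_eqI[OF category]) (auto simp: is_inverse_def)

lemma idempotent_iso_eq_Idn:
  assumes "iso B f" and "cd f = dm f" and "f \<cdot> f = f"
  shows "f = \<iota> (dm f)"
proof -
  have f: "ar f" "is_inverse B f (cinv B f)"
    using assms(1) is_inverse_cinv[OF category] unfolding iso_def by auto
  then have g: "ar (cinv B f)" "dm (cinv B f) = cd f" "cinv B f \<cdot> f = \<iota> (dm f)"
    unfolding is_inverse_def by auto
  have "\<iota> (dm f) = cinv B f \<cdot> (f \<cdot> f)" using g assms(3) by simp
  also have "\<dots> = f" using f g assms(2) by (simp add: comp_assoc[symmetric])
  finally show ?thesis by simp
qed

lemma interchange_assoc:
  "ar f \<Longrightarrow> ar g \<Longrightarrow> ar f' \<Longrightarrow> ar g' \<Longrightarrow> ar e \<Longrightarrow> cd f = dm g \<Longrightarrow> cd f' = dm g' \<Longrightarrow>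
   cd e = dm f \<odot> dm f' \<Longrightarrow> (g \<otimes> g') \<cdot> (f \<otimes> f') \<cdot> e = ((g \<cdot> f) \<otimes> (g' \<cdot> f')) \<cdot> e"
  by (simp add: interchange comp_assoc)

lemma interchange_reassoc:
  "ar f1 \<Longrightarrow> ar f2 \<Longrightarrow> ar f3 \<Longrightarrow> ar g1 \<Longrightarrow> ar g2 \<Longrightarrow> cd f1 \<odot> cd f2 = dm g1 \<Longrightarrow> cd f3 = dm g2 \<Longrightarrow>
   (g1 \<otimes> g2) \<cdot> (f1 \<otimes> (f2 \<otimes> f3)) = (g1 \<cdot> (f1 \<otimes> f2)) \<otimes> (g2 \<cdot> f3)"
  "ar f1 \<Longrightarrow> ar f2 \<Longrightarrow> ar g1 \<Longrightarrow> ar g2 \<Longrightarrow> ar g3 \<Longrightarrow> dm g1 \<odot> dm g2 = cd f1 \<Longrightarrow> dm g3 = cd f2 \<Longrightarrow>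
   (g1 \<otimes> (g2 \<otimes> g3)) \<cdot> (f1 \<otimes> f2) = ((g1 \<otimes> g2) \<cdot> f1) \<otimes> (g3 \<cdot> f2)"
  by (simp_all add: interchange Tar_assoc[symmetric])

lemma Idn_Tar_Idn_Tar: "ob X \<Longrightarrow> ob Y \<Longrightarrow> ar g \<Longrightarrow> \<iota> X \<otimes> (\<iota> Y \<otimes> g) = \<iota> (X \<odot> Y) \<otimes> g"
  by (simp add: Tar_assoc[symmetric] Tar_Idn)

lemma Idn_Tar_comp: "ob X \<Longrightarrow> ar f \<Longrightarrow> ar g \<Longrightarrow> cd f = dm g \<Longrightarrow> \<iota> X \<otimes> (g \<cdot> f) = (\<iota> X \<otimes> g) \<cdot> (\<iota> X \<otimes> f)"
  by (metis interchange Idn_comp ar_Idn Cd_Idn Dm_Idn)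

lemma comp_Tar_Idn: "ob X \<Longrightarrow> ar f \<Longrightarrow> ar g \<Longrightarrow> cd f = dm g \<Longrightarrow> (g \<cdot> f) \<otimes> \<iota> X = (g \<otimes> \<iota> X) \<cdot> (f \<otimes> \<iota> X)"
  by (metis interchange Idn_comp ar_Idn Cd_Idn Dm_Idn)

lemma whisker_exchange:
  "ar f \<Longrightarrow> ar g \<Longrightarrow> cd f = X \<Longrightarrow> dm g = Y \<Longrightarrow>
   (\<iota> X \<otimes> g) \<cdot> (f \<otimes> \<iota> Y) = (f \<otimes> \<iota> (cd g)) \<cdot> (\<iota> (dm f) \<otimes> g)"
  by (metis interchange Idn_comp comp_Idn ar_Idn Cd_Idn Dm_Idn ob_Dm ob_Cd)

lemma whisker_exchange_assoc:
  "ar f \<Longrightarrow> ar g \<Longrightarrow> ar e \<Longrightarrow> cd f = X \<Longrightarrow> dm g = Y \<Longrightarrow> cd e = dm f \<odot> Y \<Longrightarrow>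
   (\<iota> X \<otimes> g) \<cdot> (f \<otimes> \<iota> Y) \<cdot> e = (f \<otimes> \<iota> (cd g)) \<cdot> (\<iota> (dm f) \<otimes> g) \<cdot> e"
  by (subst comp_eq_extend[OF whisker_exchange[of f g X Y]]) auto

lemma whiskered_inverse_cancel:
  assumes "ar x" "ar y" "cd y = dm x" "x \<cdot> y = \<iota> (dm y)" "ob X" "ob Y"
  shows "(\<iota> X \<otimes> x \<otimes> \<iota> Y) \<cdot> (\<iota> X \<otimes> y \<otimes> \<iota> Y) = \<iota> (X \<odot> dm y \<odot> Y)"
  using assms by (simp add: interchange[symmetric] Tar_Idn)

lemma whiskered_inverse_cancel_assoc:
  assumes "ar x" "ar y" "cd y = dm x" "x \<cdot> y = \<iota> (dm y)" "ob X" "ob Y" "ar e" "cd e = X \<odot> dm y \<odot> Y"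
  shows "(\<iota> X \<otimes> x \<otimes> \<iota> Y) \<cdot> (\<iota> X \<otimes> y \<otimes> \<iota> Y) \<cdot> e = e"
  using assms by (simp add: comp_eq_extend1[OF whiskered_inverse_cancel])

lemmas whisker_simps = comp_assoc Tar_assoc Tar_Idn_Unt Tar_Idn Idn_Tar_Idn_Tar Idn_Tar_comp comp_Tar_Idn

lemma ar_Brd[simp]: "ob X \<Longrightarrow> ob Y \<Longrightarrow> ar (\<sigma> X Y)"
  and Dm_Brd[simp]: "ob X \<Longrightarrow> ob Y \<Longrightarrow> dm (\<sigma> X Y) = X \<odot> Y"
  and Cd_Brd[simp]: "ob X \<Longrightarrow> ob Y \<Longrightarrow> cd (\<sigma> X Y) = Y \<odot> X"
  and iso_Brd: "ob X \<Longrightarrow> ob Y \<Longrightarrow> iso B (\<sigma> X Y)"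
  using braided unfolding braided_monoidal_category_def hom_def by simp_all

lemma brd_nat: "ar f \<Longrightarrow> ar g \<Longrightarrow> dm f = X \<Longrightarrow> dm g = Y \<Longrightarrow> (g \<otimes> f) \<cdot> \<sigma> X Y = \<sigma> (cd f) (cd g) \<cdot> (f \<otimes> g)"
  using braided unfolding braided_monoidal_category_def by (metis (no_types))

lemma brd_Tob_right: "ob X \<Longrightarrow> ob Y \<Longrightarrow> ob Z \<Longrightarrow> \<sigma> X (Y \<odot> Z) = (\<iota> Y \<otimes> \<sigma> X Z) \<cdot> (\<sigma> X Y \<otimes> \<iota> Z)"
  using braided unfolding braided_monoidal_category_def by (simp add: Asc_eq_Idn)

lemma brd_Tob_left: "ob X \<Longrightarrow> ob Y \<Longrightarrow> ob Z \<Longrightarrow> \<sigma> (X \<odot> Y) Z = (\<sigma> X Z \<otimes> \<iota> Y) \<cdot> (\<iota> X \<otimes> \<sigma> Y Z)"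
  using braided unfolding braided_monoidal_category_def by (simp add: Asc_eq_Idn cinv_Idn)

lemma brd_brdi_inverse: "ob X \<Longrightarrow> ob Y \<Longrightarrow> is_inverse B (\<sigma> X Y) (\<tau> X Y)"
  using is_inverse_cinv[OF category iso_Brd] .

lemma ar_Brdi[simp]: "ob X \<Longrightarrow> ob Y \<Longrightarrow> ar (\<tau> X Y)"
  and Dm_Brdi[simp]: "ob X \<Longrightarrow> ob Y \<Longrightarrow> dm (\<tau> X Y) = Y \<odot> X"
  and Cd_Brdi[simp]: "ob X \<Longrightarrow> ob Y \<Longrightarrow> cd (\<tau> X Y) = X \<odot> Y"
  and brdi_brd: "ob X \<Longrightarrow> ob Y \<Longrightarrow> \<tau> X Y \<cdot> \<sigma> X Y = \<iota> (X \<odot> Y)"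
  and brd_brdi: "ob X \<Longrightarrow> ob Y \<Longrightarrow> \<sigma> X Y \<cdot> \<tau> X Y = \<iota> (Y \<odot> X)"
  using brd_brdi_inverse[of X Y] unfolding is_inverse_def by auto

lemma brdi_nat:
  assumes f: "ar f" and g: "ar g" and X: "cd f = X" and Y: "cd g = Y"
  shows "\<tau> X Y \<cdot> (g \<otimes> f) = (f \<otimes> g) \<cdot> \<tau> (dm f) (dm g)"
proof -
  have "\<tau> (cd f) (cd g) \<cdot> (g \<otimes> f) = \<tau> (cd f) (cd g) \<cdot> (g \<otimes> f) \<cdot> \<sigma> (dm f) (dm g) \<cdot> \<tau> (dm f) (dm g)"
    using f g by (simp add: brd_brdi)
  also have "\<dots> = \<tau> (cd f) (cd g) \<cdot> \<sigma> (cd f) (cd g) \<cdot> (f \<otimes> g) \<cdot> \<tau> (dm f) (dm g)"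
    using f g by (simp add: comp_eq_extend[OF brd_nat[OF f g refl refl]])
  also have "\<dots> = (f \<otimes> g) \<cdot> \<tau> (dm f) (dm g)"
    using f g by (simp add: comp_eq_extend1[OF brdi_brd])
  finally show ?thesis using X Y by simp
qed

lemma brd_Unt_right[simp]: "ob X \<Longrightarrow> \<sigma> X \<one> = \<iota> X"
proof -
  assume X: "ob X"
  have "\<sigma> X \<one> \<cdot> \<sigma> X \<one> = \<sigma> X \<one>"
    using brd_Tob_right[of X \<one> \<one>] X by (simp add: Tar_Idn_Unt)
  then show ?thesis using idempotent_iso_eq_Idn[OF iso_Brd[OF X ob_Unt]] X by simp
qed

lemma brd_Unt_left[simp]: "ob X \<Longrightarrow> \<sigma> \<one> X = \<iota> X"
proof -
  assume X: "ob X"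
  have "\<sigma> \<one> X \<cdot> \<sigma> \<one> X = \<sigma> \<one> X"
    using brd_Tob_left[of \<one> \<one> X] X by (simp add: Tar_Idn_Unt)
  then show ?thesis using idempotent_iso_eq_Idn[OF iso_Brd[OF ob_Unt X]] X by simp
qed

lemma brdi_Unt[simp]: "ob X \<Longrightarrow> \<tau> X \<one> = \<iota> X" "ob X \<Longrightarrow> \<tau> \<one> X = \<iota> X"
  by (simp_all add: cinv_Idn)

lemma brdi_Tob_right: "ob X \<Longrightarrow> ob Y \<Longrightarrow> ob Z \<Longrightarrow> \<tau> X (Y \<odot> Z) = (\<tau> X Y \<otimes> \<iota> Z) \<cdot> (\<iota> Y \<otimes> \<tau> X Z)"
  by (intro cinv_eqI[OF category]) 
    (simp_all add: brd_Tob_right is_inverse_comp is_inverse_Tar is_inverse_Idn brd_brdi_inverse)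

lemma brdi_Tob_left: "ob X \<Longrightarrow> ob Y \<Longrightarrow> ob Z \<Longrightarrow> \<tau> (X \<odot> Y) Z = (\<iota> X \<otimes> \<tau> Y Z) \<cdot> (\<tau> X Z \<otimes> \<iota> Y)"
  by (intro cinv_eqI[OF category]) 
    (simp_all add: brd_Tob_left is_inverse_comp is_inverse_Tar is_inverse_Idn brd_brdi_inverse)

section \<open>The middle interchange\<close>

abbreviation mid_brd where "mid_brd a b p q \<equiv> (\<iota> a \<otimes> \<sigma> b p) \<otimes> \<iota> q"
abbreviation mid_brdi where "mid_brdi a b p q \<equiv> (\<iota> a \<otimes> \<tau> b p) \<otimes> \<iota> q"

lemma mid_brd_nat:
  "ar f1 \<Longrightarrow> ar f2 \<Longrightarrow> ar g1 \<Longrightarrow> ar g2 \<Longrightarrow>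
   ((f1 \<otimes> g1) \<otimes> (f2 \<otimes> g2)) \<cdot> mid_brd (dm f1) (dm f2) (dm g1) (dm g2) =
   mid_brd (cd f1) (cd f2) (cd g1) (cd g2) \<cdot> ((f1 \<otimes> f2) \<otimes> (g1 \<otimes> g2))"
  by (simp add: Tar_assoc interchange[symmetric] interchange_reassoc brd_nat)

lemma mid_brdi_nat:
  "ar f1 \<Longrightarrow> ar f2 \<Longrightarrow> ar g1 \<Longrightarrow> ar g2 \<Longrightarrow>
   mid_brdi (cd f1) (cd f2) (cd g1) (cd g2) \<cdot> ((f1 \<otimes> g1) \<otimes> (f2 \<otimes> g2)) =
   ((f1 \<otimes> f2) \<otimes> (g1 \<otimes> g2)) \<cdot> mid_brdi (dm f1) (dm f2) (dm g1) (dm g2)"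
  by (simp add: Tar_assoc interchange[symmetric] interchange_reassoc brdi_nat)

text \<open>Each coherence law of the middle interchange is the case \<open>a = w = \<one>\<close>, whiskered by \<open>a\<close>
  and \<open>w\<close>. That case holds because both sides agree once braidings of tensor products are expanded
  by the hexagon identities and whiskered arrows are slid past each other by the interchange law.\<close>


lemma mid_brdi_assoc:
  assumes "ob a" "ob b" "ob z" "ob p" "ob q" "ob w"
  shows "mid_brdi (a \<odot> b) z (p \<odot> q) w \<cdot> (mid_brdi a b p q \<otimes> \<iota> (z \<odot> w)) =
         mid_brdi a (b \<odot> z) p (q \<odot> w) \<cdot> (\<iota> (a \<odot> p) \<otimes> mid_brdi b z q w)"
proof -
  have "(\<iota> b \<otimes> \<tau> z (p \<odot> q)) \<cdot> (\<tau> b p \<otimes> \<iota> (q \<odot> z)) = (\<tau> (b \<odot> z) p \<otimes> \<iota> q) \<cdot> (\<iota> (p \<odot> b) \<otimes> \<tau> z q)"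
    using assms by (simp add: whisker_simps whisker_exchange whisker_exchange_assoc
        brdi_Tob_right brdi_Tob_left)
  from arg_cong[OF this, of "\<lambda>x. \<iota> a \<otimes> x \<otimes> \<iota> w"] show ?thesis
    using assms by (simp add: whisker_simps)
qed

lemma mid_brd_assoc:
  assumes "ob a" "ob b" "ob z" "ob p" "ob q" "ob w"
  shows "(mid_brd a b p q \<otimes> \<iota> (z \<odot> w)) \<cdot> mid_brd (a \<odot> b) z (p \<odot> q) w =
         (\<iota> (a \<odot> p) \<otimes> mid_brd b z q w) \<cdot> mid_brd a (b \<odot> z) p (q \<odot> w)"
proof -
  have "(\<sigma> b p \<otimes> \<iota> (q \<odot> z)) \<cdot> (\<iota> b \<otimes> \<sigma> z (p \<odot> q)) = (\<iota> (p \<odot> b) \<otimes> \<sigma> z q) \<cdot> (\<sigma> (b \<odot> z) p \<otimes> \<iota> q)"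
    using assms by (simp add: whisker_simps whisker_exchange whisker_exchange_assoc
        brd_Tob_right brd_Tob_left)
  from arg_cong[OF this, of "\<lambda>x. \<iota> a \<otimes> x \<otimes> \<iota> w"] show ?thesis
    using assms by (simp add: whisker_simps)
qed

lemma mid_brd_frobenius1:
  assumes "ob a" "ob b" "ob z" "ob p" "ob q" "ob w"
  shows "mid_brd a (b \<odot> z) p (q \<odot> w) \<cdot> mid_brdi (a \<odot> b) z (p \<odot> q) w =
         (\<iota> (a \<odot> p) \<otimes> mid_brdi b z q w) \<cdot> (mid_brd a b p q \<otimes> \<iota> (z \<odot> w))"
proof -
  have "(\<sigma> (b \<odot> z) p \<otimes> \<iota> q) \<cdot> (\<iota> b \<otimes> \<tau> z (p \<odot> q)) = (\<iota> (p \<odot> b) \<otimes> \<tau> z q) \<cdot> (\<sigma> b p \<otimes> \<iota> (q \<odot> z))"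
    using assms by (simp add: whisker_simps whisker_exchange whisker_exchange_assoc
        brd_Tob_left brdi_Tob_right
        whiskered_inverse_cancel_assoc brd_brdi)
  from arg_cong[OF this, of "\<lambda>x. \<iota> a \<otimes> x \<otimes> \<iota> w"] show ?thesis
    using assms by (simp add: whisker_simps)
qed

lemma mid_brd_frobenius2:
  assumes "ob a" "ob b" "ob z" "ob p" "ob q" "ob w"
  shows "mid_brd (a \<odot> b) z (p \<odot> q) w \<cdot> mid_brdi a (b \<odot> z) p (q \<odot> w) =
         (mid_brdi a b p q \<otimes> \<iota> (z \<odot> w)) \<cdot> (\<iota> (a \<odot> p) \<otimes> mid_brd b z q w)"
proof -
  have "(\<iota> b \<otimes> \<sigma> z (p \<odot> q)) \<cdot> (\<tau> (b \<odot> z) p \<otimes> \<iota> q) = (\<tau> b p \<otimes> \<iota> (q \<odot> z)) \<cdot> (\<iota> (p \<odot> b) \<otimes> \<sigma> z q)"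
    using assms by (simp add: whisker_simps whisker_exchange whisker_exchange_assoc
        brd_Tob_right brdi_Tob_left
        whiskered_inverse_cancel_assoc brd_brdi)
  from arg_cong[OF this, of "\<lambda>x. \<iota> a \<otimes> x \<otimes> \<iota> w"] show ?thesis
    using assms by (simp add: whisker_simps)
qed

lemma tensor_r_nat:
  assumes h: "hom B f1 a a'" "hom B f2 b b'" "hom B g1 p p'" "hom B g2 q q'"
  "hom B rF (a \<odot> b) u" "hom B rF' (a' \<odot> b') u'" "hom B rG (p \<odot> q) v" "hom B rG' (p' \<odot> q') v'"
  "hom B hF u u'" "hom B hG v v'"
  and eF: "rF' \<cdot> (f1 \<otimes> f2) = hF \<cdot> rF" and eG: "rG' \<cdot> (g1 \<otimes> g2) = hG \<cdot> rG"
  shows "((rF' \<otimes> rG') \<cdot> mid_brdi a' b' p' q') \<cdot> ((f1 \<otimes> g1) \<otimes> (f2 \<otimes> g2)) =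
      (hF \<otimes> hG) \<cdot> ((rF \<otimes> rG) \<cdot> mid_brdi a b p q)"
proof -
  note types = h[THEN homD]
  have mid_nat: "mid_brdi a' b' p' q' \<cdot> ((f1 \<otimes> g1) \<otimes> (f2 \<otimes> g2)) = ((f1 \<otimes> f2) \<otimes> (g1 \<otimes> g2)) \<cdot> mid_brdi a b p q"
    using mid_brdi_nat[of f1 f2 g1 g2] types by simp
  have "((rF' \<otimes> rG') \<cdot> mid_brdi a' b' p' q') \<cdot> ((f1 \<otimes> g1) \<otimes> (f2 \<otimes> g2)) =
      (rF' \<otimes> rG') \<cdot> (mid_brdi a' b' p' q' \<cdot> ((f1 \<otimes> g1) \<otimes> (f2 \<otimes> g2)))"
    using types by (simp add: comp_assoc)
  also have "\<dots> = (rF' \<otimes> rG') \<cdot> (((f1 \<otimes> f2) \<otimes> (g1 \<otimes> g2)) \<cdot> mid_brdi a b p q)" using mid_nat by simp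
  also have "\<dots> =
      ((rF' \<cdot> (f1 \<otimes> f2)) \<otimes> (rG' \<cdot> (g1 \<otimes> g2))) \<cdot> mid_brdi a b p q"
    using types by (simp add: interchange_assoc)
  also have "\<dots> = ((hF \<cdot> rF) \<otimes> (hG \<cdot> rG)) \<cdot> mid_brdi a b p q" using eF eG by simp
  also have "\<dots> = (hF \<otimes> hG) \<cdot> ((rF \<otimes> rG) \<cdot> mid_brdi a b p q)"
    using types by (simp add: interchange_assoc)
  finally show ?thesis .
qed

lemma tensor_r_assoc:
  assumes h: "ob a" "ob b" "ob z" "ob p" "ob q" "ob w"
  "hom B rF1 (a \<odot> b) s" "hom B rF2 (s \<odot> z) u" "hom B rF3 (b \<odot> z) s2" "hom B rF4 (a \<odot> s2) u"
  "hom B rG1 (p \<odot> q) t" "hom B rG2 (t \<odot> w) v" "hom B rG3 (q \<odot> w) t2" "hom B rG4 (p \<odot> t2) v"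
  and eF: "rF2 \<cdot> (rF1 \<otimes> \<iota> z) = rF4 \<cdot> (\<iota> a \<otimes> rF3)" and eG: "rG2 \<cdot> (rG1 \<otimes> \<iota> w) = rG4 \<cdot> (\<iota> p \<otimes> rG3)"
  shows "((rF2 \<otimes> rG2) \<cdot> mid_brdi s z t w) \<cdot> (((rF1 \<otimes> rG1) \<cdot> mid_brdi a b p q) \<otimes> \<iota> (z \<odot> w)) =
         ((rF4 \<otimes> rG4) \<cdot> mid_brdi a s2 p t2) \<cdot> (\<iota> (a \<odot> p) \<otimes> ((rF3 \<otimes> rG3) \<cdot> mid_brdi b z q w))"
proof -
  note types = h(1-6) h(7-)[THEN homD]
  have mid_nat1: "mid_brdi s z t w \<cdot> ((rF1 \<otimes> rG1) \<otimes> \<iota> (z \<odot> w)) =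
      ((rF1 \<otimes> \<iota> z) \<otimes> (rG1 \<otimes> \<iota> w)) \<cdot> mid_brdi (a \<odot> b) z (p \<odot> q) w"
    using mid_brdi_nat[of rF1 "\<iota> z" rG1 "\<iota> w"] types by (simp add: Tar_Idn)
  have mid_nat2: "mid_brdi a s2 p t2 \<cdot> (\<iota> (a \<odot> p) \<otimes> (rF3 \<otimes> rG3)) =
      ((\<iota> a \<otimes> rF3) \<otimes> (\<iota> p \<otimes> rG3)) \<cdot> mid_brdi a (b \<odot> z) p (q \<odot> w)"
    using mid_brdi_nat[of "\<iota> a" rF3 "\<iota> p" rG3] types by (simp add: Tar_Idn)
  have mid_coh: "mid_brdi (a \<odot> b) z (p \<odot> q) w \<cdot> (mid_brdi a b p q \<otimes> \<iota> (z \<odot> w)) =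
      mid_brdi a (b \<odot> z) p (q \<odot> w) \<cdot> (\<iota> (a \<odot> p) \<otimes> mid_brdi b z q w)"
    using types by (intro mid_brdi_assoc) auto
  have "((rF2 \<otimes> rG2) \<cdot> mid_brdi s z t w) \<cdot> (((rF1 \<otimes> rG1) \<cdot> mid_brdi a b p q) \<otimes> \<iota> (z \<odot> w)) =
     (rF2 \<otimes> rG2) \<cdot> (mid_brdi s z t w \<cdot> (((rF1 \<otimes> rG1) \<otimes> \<iota> (z \<odot> w)) \<cdot> (mid_brdi a b p q \<otimes> \<iota> (z \<odot> w))))"
    using types by (simp add: comp_Tar_Idn comp_assoc)
  also have "\<dots> =
      (rF2 \<otimes> rG2) \<cdot> (((rF1 \<otimes> \<iota> z) \<otimes> (rG1 \<otimes> \<iota> w)) \<cdot>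
        (mid_brdi (a \<odot> b) z (p \<odot> q) w \<cdot> (mid_brdi a b p q \<otimes> \<iota> (z \<odot> w))))"
    using types by (simp add: comp_eq_extend[OF mid_nat1])
  also have "\<dots> =
      ((rF2 \<cdot> (rF1 \<otimes> \<iota> z)) \<otimes> (rG2 \<cdot> (rG1 \<otimes> \<iota> w))) \<cdot>
        (mid_brdi (a \<odot> b) z (p \<odot> q) w \<cdot> (mid_brdi a b p q \<otimes> \<iota> (z \<odot> w)))"
    using types by (intro interchange_assoc) simp_all
  also have "\<dots> =
      ((rF4 \<cdot> (\<iota> a \<otimes> rF3)) \<otimes> (rG4 \<cdot> (\<iota> p \<otimes> rG3))) \<cdot>
        (mid_brdi a (b \<odot> z) p (q \<odot> w) \<cdot> (\<iota> (a \<odot> p) \<otimes> mid_brdi b z q w))"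
    using eF eG mid_coh by simp
  also have "\<dots> =
      (rF4 \<otimes> rG4) \<cdot> (((\<iota> a \<otimes> rF3) \<otimes> (\<iota> p \<otimes> rG3)) \<cdot>
        (mid_brdi a (b \<odot> z) p (q \<odot> w) \<cdot> (\<iota> (a \<odot> p) \<otimes> mid_brdi b z q w)))"
    using types by (intro interchange_assoc[symmetric]) simp_all
  also have "\<dots> =
      (rF4 \<otimes> rG4) \<cdot> (mid_brdi a s2 p t2 \<cdot> ((\<iota> (a \<odot> p) \<otimes> (rF3 \<otimes> rG3)) \<cdot> (\<iota> (a \<odot> p) \<otimes> mid_brdi b z q w)))"
    using types by (simp add: comp_eq_extend[OF mid_nat2[symmetric]])
  also have "\<dots> = ((rF4 \<otimes> rG4) \<cdot> mid_brdi a s2 p t2) \<cdot> (\<iota> (a \<odot> p) \<otimes> ((rF3 \<otimes> rG3) \<cdot> mid_brdi b z q w))"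
    using types by (simp add: Idn_Tar_comp comp_assoc)
  finally show ?thesis .
qed

lemma tensor_r_unit_left:
  assumes h: "ob x" "ob y" "hom B r0F \<one> e" "hom B r0G \<one> e'" "hom B rF (e \<odot> x) x" "hom B rG (e' \<odot> y) y"
  and eF: "rF \<cdot> (r0F \<otimes> \<iota> x) = \<iota> x" and eG: "rG \<cdot> (r0G \<otimes> \<iota> y) = \<iota> y"
  shows "((rF \<otimes> rG) \<cdot> mid_brdi e x e' y) \<cdot> ((r0F \<otimes> r0G) \<otimes> \<iota> (x \<odot> y)) = \<iota> (x \<odot> y)"
proof -
  note types = h(1-2) h(3-)[THEN homD]
  have mid_nat: "mid_brdi e x e' y \<cdot> ((r0F \<otimes> r0G) \<otimes> \<iota> (x \<odot> y)) = ((r0F \<otimes> \<iota> x) \<otimes> (r0G \<otimes> \<iota> y))"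
    using mid_brdi_nat[of r0F "\<iota> x" r0G "\<iota> y"] types by (simp add: Tar_Idn Tar_Idn_Unt cinv_Idn)
  have "((rF \<otimes> rG) \<cdot> mid_brdi e x e' y) \<cdot> ((r0F \<otimes> r0G) \<otimes> \<iota> (x \<odot> y)) =
      (rF \<otimes> rG) \<cdot> (mid_brdi e x e' y \<cdot> ((r0F \<otimes> r0G) \<otimes> \<iota> (x \<odot> y)))"
    using types by (simp add: comp_assoc)
  also have "\<dots> = (rF \<cdot> (r0F \<otimes> \<iota> x)) \<otimes> (rG \<cdot> (r0G \<otimes> \<iota> y))"
    using types mid_nat by (simp add: interchange)
  also have "\<dots> = \<iota> (x \<odot> y)" using eF eG types by (simp add: Tar_Idn)
  finally show ?thesis .
qed

lemma tensor_r_unit_right: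
  assumes h: "ob x" "ob y" "hom B r0F \<one> e" "hom B r0G \<one> e'" "hom B rF (x \<odot> e) x" "hom B rG (y \<odot> e') y"
  and eF: "rF \<cdot> (\<iota> x \<otimes> r0F) = \<iota> x" and eG: "rG \<cdot> (\<iota> y \<otimes> r0G) = \<iota> y"
  shows "((rF \<otimes> rG) \<cdot> mid_brdi x e y e') \<cdot> (\<iota> (x \<odot> y) \<otimes> (r0F \<otimes> r0G)) = \<iota> (x \<odot> y)"
proof -
  note types = h(1-2) h(3-)[THEN homD]
  have mid_nat: "mid_brdi x e y e' \<cdot> (\<iota> (x \<odot> y) \<otimes> (r0F \<otimes> r0G)) = ((\<iota> x \<otimes> r0F) \<otimes> (\<iota> y \<otimes> r0G))"
    using mid_brdi_nat[of "\<iota> x" r0F "\<iota> y" r0G] types by (simp add: Tar_Idn Tar_Idn_Unt cinv_Idn)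
  have "((rF \<otimes> rG) \<cdot> mid_brdi x e y e') \<cdot> (\<iota> (x \<odot> y) \<otimes> (r0F \<otimes> r0G)) =
      (rF \<otimes> rG) \<cdot> (mid_brdi x e y e' \<cdot> (\<iota> (x \<odot> y) \<otimes> (r0F \<otimes> r0G)))"
    using types by (simp add: comp_assoc)
  also have "\<dots> = (rF \<cdot> (\<iota> x \<otimes> r0F)) \<otimes> (rG \<cdot> (\<iota> y \<otimes> r0G))"
    using types mid_nat by (simp add: interchange)
  also have "\<dots> = \<iota> (x \<odot> y)" using eF eG types by (simp add: Tar_Idn)
  finally show ?thesis .
qed

lemma tensor_i_nat:
  assumes h: "hom B f1 a a'" "hom B f2 b b'" "hom B g1 p p'" "hom B g2 q q'"
  "hom B iF u (a \<odot> b)" "hom B iF' u' (a' \<odot> b')" "hom B iG v (p \<odot> q)" "hom B iG' v' (p' \<odot> q')"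
  "hom B hF u u'" "hom B hG v v'"
  and eF: "(f1 \<otimes> f2) \<cdot> iF = iF' \<cdot> hF" and eG: "(g1 \<otimes> g2) \<cdot> iG = iG' \<cdot> hG"
  shows "((f1 \<otimes> g1) \<otimes> (f2 \<otimes> g2)) \<cdot> (mid_brd a b p q \<cdot> (iF \<otimes> iG)) =
      (mid_brd a' b' p' q' \<cdot> (iF' \<otimes> iG')) \<cdot> (hF \<otimes> hG)"
proof -
  note types = h[THEN homD]
  have mid_nat: "((f1 \<otimes> g1) \<otimes> (f2 \<otimes> g2)) \<cdot> mid_brd a b p q = mid_brd a' b' p' q' \<cdot> ((f1 \<otimes> f2) \<otimes> (g1 \<otimes> g2))"
    using mid_brd_nat[of f1 f2 g1 g2] types by simp
  have "((f1 \<otimes> g1) \<otimes> (f2 \<otimes> g2)) \<cdot> (mid_brd a b p q \<cdot> (iF \<otimes> iG)) =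
      mid_brd a' b' p' q' \<cdot> (((f1 \<otimes> f2) \<otimes> (g1 \<otimes> g2)) \<cdot> (iF \<otimes> iG))"
    using types by (simp add: comp_eq_extend1[OF mid_nat] comp_assoc)
  also have "\<dots> = mid_brd a' b' p' q' \<cdot> (((f1 \<otimes> f2) \<cdot> iF) \<otimes> ((g1 \<otimes> g2) \<cdot> iG))"
    using types by (simp add: interchange)
  also have "\<dots> = mid_brd a' b' p' q' \<cdot> ((iF' \<cdot> hF) \<otimes> (iG' \<cdot> hG))" using eF eG by simp
  also have "\<dots> = (mid_brd a' b' p' q' \<cdot> (iF' \<otimes> iG')) \<cdot> (hF \<otimes> hG)"
    using types by (simp add: interchange comp_assoc)
  finally show ?thesis .
qed

lemma tensor_i_counit_left:
  assumes h: "ob x" "ob y" "hom B i0F e \<one>" "hom B i0G e' \<one>" "hom B iF x (e \<odot> x)" "hom B iG y (e' \<odot> y)"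
  and eF: "(i0F \<otimes> \<iota> x) \<cdot> iF = \<iota> x" and eG: "(i0G \<otimes> \<iota> y) \<cdot> iG = \<iota> y"
  shows "((i0F \<otimes> i0G) \<otimes> \<iota> (x \<odot> y)) \<cdot> (mid_brd e x e' y \<cdot> (iF \<otimes> iG)) = \<iota> (x \<odot> y)"
proof -
  note types = h(1-2) h(3-)[THEN homD]
  have mid_nat: "((i0F \<otimes> i0G) \<otimes> \<iota> (x \<odot> y)) \<cdot> mid_brd e x e' y = ((i0F \<otimes> \<iota> x) \<otimes> (i0G \<otimes> \<iota> y))"
    using mid_brd_nat[of i0F "\<iota> x" i0G "\<iota> y"] types by (simp add: Tar_Idn Tar_Idn_Unt)
  have "((i0F \<otimes> i0G) \<otimes> \<iota> (x \<odot> y)) \<cdot> (mid_brd e x e' y \<cdot>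
    (iF \<otimes> iG)) = ((i0F \<otimes> \<iota> x) \<otimes> (i0G \<otimes> \<iota> y)) \<cdot> (iF \<otimes> iG)"
    using types by (simp add: comp_eq_extend1[OF mid_nat])
  also have "\<dots> = ((i0F \<otimes> \<iota> x) \<cdot> iF) \<otimes> ((i0G \<otimes> \<iota> y) \<cdot> iG)"
    using types by (simp add: interchange)
  also have "\<dots> = \<iota> (x \<odot> y)" using eF eG types by (simp add: Tar_Idn)
  finally show ?thesis .
qed

lemma tensor_i_counit_right:
  assumes h: "ob x" "ob y" "hom B i0F e \<one>" "hom B i0G e' \<one>" "hom B iF x (x \<odot> e)" "hom B iG y (y \<odot> e')"
  and eF: "(\<iota> x \<otimes> i0F) \<cdot> iF = \<iota> x" and eG: "(\<iota> y \<otimes> i0G) \<cdot> iG = \<iota> y"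
  shows "(\<iota> (x \<odot> y) \<otimes> (i0F \<otimes> i0G)) \<cdot> (mid_brd x e y e' \<cdot> (iF \<otimes> iG)) = \<iota> (x \<odot> y)"
proof -
  note types = h(1-2) h(3-)[THEN homD]
  have mid_nat: "(\<iota> (x \<odot> y) \<otimes> (i0F \<otimes> i0G)) \<cdot> mid_brd x e y e' = ((\<iota> x \<otimes> i0F) \<otimes> (\<iota> y \<otimes> i0G))"
    using mid_brd_nat[of "\<iota> x" i0F "\<iota> y" i0G] types by (simp add: Tar_Idn Tar_Idn_Unt cinv_Idn)
  have "(\<iota> (x \<odot> y) \<otimes> (i0F \<otimes> i0G)) \<cdot> (mid_brd x e y e' \<cdot>
    (iF \<otimes> iG)) = ((\<iota> x \<otimes> i0F) \<otimes> (\<iota> y \<otimes> i0G)) \<cdot> (iF \<otimes> iG)"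
    using types by (simp add: comp_eq_extend1[OF mid_nat])
  also have "\<dots> = ((\<iota> x \<otimes> i0F) \<cdot> iF) \<otimes> ((\<iota> y \<otimes> i0G) \<cdot> iG)"
    using types by (simp add: interchange)
  also have "\<dots> = \<iota> (x \<odot> y)" using eF eG types by (simp add: Tar_Idn)
  finally show ?thesis .
qed

lemma tensor_i_coassoc:
  assumes h: "ob a" "ob b" "ob z" "ob p" "ob q" "ob w"
  "hom B iF1 s (a \<odot> b)" "hom B iF2 u (s \<odot> z)" "hom B iF3 s2 (b \<odot> z)" "hom B iF4 u (a \<odot> s2)"
  "hom B iG1 t (p \<odot> q)" "hom B iG2 v (t \<odot> w)" "hom B iG3 t2 (q \<odot> w)" "hom B iG4 v (p \<odot> t2)"
  and eF: "(iF1 \<otimes> \<iota> z) \<cdot> iF2 = (\<iota> a \<otimes> iF3) \<cdot> iF4" and eG: "(iG1 \<otimes> \<iota> w) \<cdot> iG2 = (\<iota> p \<otimes> iG3) \<cdot> iG4"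
  shows "((mid_brd a b p q \<cdot> (iF1 \<otimes> iG1)) \<otimes> \<iota> (z \<odot> w)) \<cdot> (mid_brd s z t w \<cdot> (iF2 \<otimes> iG2)) =
         (\<iota> (a \<odot> p) \<otimes> (mid_brd b z q w \<cdot> (iF3 \<otimes> iG3))) \<cdot> (mid_brd a s2 p t2 \<cdot> (iF4 \<otimes> iG4))"
proof -
  note types = h(1-6) h(7-)[THEN homD]
  have mid_nat1: "((iF1 \<otimes> iG1) \<otimes> \<iota> (z \<odot> w)) \<cdot> mid_brd s z t w =
      mid_brd (a \<odot> b) z (p \<odot> q) w \<cdot> ((iF1 \<otimes> \<iota> z) \<otimes> (iG1 \<otimes> \<iota> w))"
    using mid_brd_nat[of iF1 "\<iota> z" iG1 "\<iota> w"] types by (simp add: Tar_Idn)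
  have mid_nat2: "(\<iota> (a \<odot> p) \<otimes> (iF3 \<otimes> iG3)) \<cdot> mid_brd a s2 p t2 =
      mid_brd a (b \<odot> z) p (q \<odot> w) \<cdot> ((\<iota> a \<otimes> iF3) \<otimes> (\<iota> p \<otimes> iG3))"
    using mid_brd_nat[of "\<iota> a" iF3 "\<iota> p" iG3] types by (simp add: Tar_Idn)
  have mid_coh: "(mid_brd a b p q \<otimes> \<iota> (z \<odot> w)) \<cdot> mid_brd (a \<odot> b) z (p \<odot> q) w =
      (\<iota> (a \<odot> p) \<otimes> mid_brd b z q w) \<cdot> mid_brd a (b \<odot> z) p (q \<odot> w)"
    using types by (intro mid_brd_assoc) auto
  have "((mid_brd a b p q \<cdot> (iF1 \<otimes> iG1)) \<otimes> \<iota> (z \<odot> w)) \<cdot> (mid_brd s z t w \<cdot> (iF2 \<otimes> iG2)) =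
     (mid_brd a b p q \<otimes> \<iota> (z \<odot> w)) \<cdot> (((iF1 \<otimes> iG1) \<otimes> \<iota> (z \<odot> w)) \<cdot> (mid_brd s z t w \<cdot> (iF2 \<otimes> iG2)))"
    using types by (simp add: comp_Tar_Idn comp_assoc)
  also have "\<dots> =
      (mid_brd a b p q \<otimes> \<iota> (z \<odot> w)) \<cdot> (mid_brd (a \<odot> b) z (p \<odot> q) w \<cdot>
        (((iF1 \<otimes> \<iota> z) \<otimes> (iG1 \<otimes> \<iota> w)) \<cdot> (iF2 \<otimes> iG2)))"
    using types by (simp add: comp_eq_extend[OF mid_nat1])
  also have "\<dots> =
      (mid_brd a b p q \<otimes> \<iota> (z \<odot> w)) \<cdot> (mid_brd (a \<odot> b) z (p \<odot> q) w \<cdot>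
        (((iF1 \<otimes> \<iota> z) \<cdot> iF2) \<otimes> ((iG1 \<otimes> \<iota> w) \<cdot> iG2)))"
    using types by (simp add: interchange)
  also have "\<dots> =
      (mid_brd a b p q \<otimes> \<iota> (z \<odot> w)) \<cdot> (mid_brd (a \<odot> b) z (p \<odot> q) w \<cdot>
        (((\<iota> a \<otimes> iF3) \<cdot> iF4) \<otimes> ((\<iota> p \<otimes> iG3) \<cdot> iG4)))"
    using eF eG by simp
  also have "\<dots> =
      (mid_brd a b p q \<otimes> \<iota> (z \<odot> w)) \<cdot> (mid_brd (a \<odot> b) z (p \<odot> q) w \<cdot>
        (((\<iota> a \<otimes> iF3) \<otimes> (\<iota> p \<otimes> iG3)) \<cdot> (iF4 \<otimes> iG4)))"
    using types by (simp add: interchange)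
  also have "\<dots> =
      (\<iota> (a \<odot> p) \<otimes> mid_brd b z q w) \<cdot> (mid_brd a (b \<odot> z) p (q \<odot> w) \<cdot>
        (((\<iota> a \<otimes> iF3) \<otimes> (\<iota> p \<otimes> iG3)) \<cdot> (iF4 \<otimes> iG4)))"
    using types by (simp add: comp_eq_extend[OF mid_coh])
  also have "\<dots> =
      (\<iota> (a \<odot> p) \<otimes> mid_brd b z q w) \<cdot> ((\<iota> (a \<odot> p) \<otimes> (iF3 \<otimes> iG3)) \<cdot> (mid_brd a s2 p t2 \<cdot> (iF4 \<otimes> iG4)))"
    using types by (simp add: comp_eq_extend[OF mid_nat2[symmetric]])
  also have "\<dots> = (\<iota> (a \<odot> p) \<otimes> (mid_brd b z q w \<cdot> (iF3 \<otimes> iG3))) \<cdot> (mid_brd a s2 p t2 \<cdot> (iF4 \<otimes> iG4))"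
    using types by (simp add: Idn_Tar_comp comp_assoc)
  finally show ?thesis .
qed

lemma tensor_frobenius1:
  assumes h: "ob a" "ob b" "ob z" "ob p" "ob q" "ob w"
  "hom B iF1 s (a \<odot> b)" "hom B rF' (s \<odot> z) u" "hom B rF3 (b \<odot> z) s2" "hom B iF' u (a \<odot> s2)"
  "hom B iG1 t (p \<odot> q)" "hom B rG' (t \<odot> w) v" "hom B rG3 (q \<odot> w) t2" "hom B iG' v (p \<odot> t2)"
  and eF: "iF' \<cdot> rF' = (\<iota> a \<otimes> rF3) \<cdot> (iF1 \<otimes> \<iota> z)" and eG: "iG' \<cdot> rG' = (\<iota> p \<otimes> rG3) \<cdot> (iG1 \<otimes> \<iota> w)"
  shows "(mid_brd a s2 p t2 \<cdot> (iF' \<otimes> iG')) \<cdot> ((rF' \<otimes> rG') \<cdot> mid_brdi s z t w) =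
         (\<iota> (a \<odot> p) \<otimes> ((rF3 \<otimes> rG3) \<cdot> mid_brdi b z q w)) \<cdot> ((mid_brd a b p q \<cdot> (iF1 \<otimes> iG1)) \<otimes> \<iota> (z \<odot> w))"
proof -
  note types = h(1-6) h(7-)[THEN homD]
  have mid_nat1: "mid_brd a s2 p t2 \<cdot> ((\<iota> a \<otimes> rF3) \<otimes> (\<iota> p \<otimes> rG3)) =
      (\<iota> (a \<odot> p) \<otimes> (rF3 \<otimes> rG3)) \<cdot> mid_brd a (b \<odot> z) p (q \<odot> w)"
    using mid_brd_nat[of "\<iota> a" rF3 "\<iota> p" rG3] types by (simp add: Tar_Idn)
  have mid_nat2: "((iF1 \<otimes> \<iota> z) \<otimes> (iG1 \<otimes> \<iota> w)) \<cdot> mid_brdi s z t w =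
      mid_brdi (a \<odot> b) z (p \<odot> q) w \<cdot> ((iF1 \<otimes> iG1) \<otimes> \<iota> (z \<odot> w))"
    using mid_brdi_nat[of iF1 "\<iota> z" iG1 "\<iota> w"] types by (simp add: Tar_Idn)
  have mid_coh: "mid_brd a (b \<odot> z) p (q \<odot> w) \<cdot> mid_brdi (a \<odot> b) z (p \<odot> q) w =
      (\<iota> (a \<odot> p) \<otimes> mid_brdi b z q w) \<cdot> (mid_brd a b p q \<otimes> \<iota> (z \<odot> w))"
    using types by (intro mid_brd_frobenius1) auto
  have "(mid_brd a s2 p t2 \<cdot> (iF' \<otimes> iG')) \<cdot> ((rF' \<otimes> rG') \<cdot> mid_brdi s z t w) =
     mid_brd a s2 p t2 \<cdot> ((iF' \<otimes> iG') \<cdot> ((rF' \<otimes> rG') \<cdot> mid_brdi s z t w))"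
    using types by (simp add: comp_assoc)
  also have "\<dots> = mid_brd a s2 p t2 \<cdot> (((iF' \<cdot> rF') \<otimes> (iG' \<cdot> rG')) \<cdot> mid_brdi s z t w)"
    using types by (intro arg_cong[where f="\<lambda>x. mid_brd a s2 p t2 \<cdot> x"] interchange_assoc) simp_all
  also have "\<dots> =
      mid_brd a s2 p t2 \<cdot> ((((\<iota> a \<otimes> rF3) \<cdot> (iF1 \<otimes> \<iota> z)) \<otimes> ((\<iota> p \<otimes> rG3) \<cdot> (iG1 \<otimes> \<iota> w))) \<cdot> mid_brdi s z t w)"
    using eF eG by simp
  also have "\<dots> =
      mid_brd a s2 p t2 \<cdot> (((\<iota> a \<otimes> rF3) \<otimes> (\<iota> p \<otimes> rG3)) \<cdot> (((iF1 \<otimes> \<iota> z) \<otimes> (iG1 \<otimes> \<iota> w)) \<cdot> mid_brdi s z t w))"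
    using types by (intro arg_cong[where f="\<lambda>x. mid_brd a s2 p t2 \<cdot> x"] interchange_assoc[symmetric]) simp_all
  also have "\<dots> =
      (\<iota> (a \<odot> p) \<otimes> (rF3 \<otimes> rG3)) \<cdot> (mid_brd a (b \<odot> z) p (q \<odot> w) \<cdot>
        (((iF1 \<otimes> \<iota> z) \<otimes> (iG1 \<otimes> \<iota> w)) \<cdot> mid_brdi s z t w))"
    using types by (simp add: comp_eq_extend[OF mid_nat1])
  also have "\<dots> =
      (\<iota> (a \<odot> p) \<otimes> (rF3 \<otimes> rG3)) \<cdot> (mid_brd a (b \<odot> z) p (q \<odot> w) \<cdot>
        (mid_brdi (a \<odot> b) z (p \<odot> q) w \<cdot> ((iF1 \<otimes> iG1) \<otimes> \<iota> (z \<odot> w))))"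
    using mid_nat2 by simp
  also have "\<dots> =
      (\<iota> (a \<odot> p) \<otimes> (rF3 \<otimes> rG3)) \<cdot> ((\<iota> (a \<odot> p) \<otimes> mid_brdi b z q w) \<cdot>
        ((mid_brd a b p q \<otimes> \<iota> (z \<odot> w)) \<cdot> ((iF1 \<otimes> iG1) \<otimes> \<iota> (z \<odot> w))))"
    using types by (simp add: comp_eq_extend[OF mid_coh])
  also have "\<dots> =
      (\<iota> (a \<odot> p) \<otimes> ((rF3 \<otimes> rG3) \<cdot> mid_brdi b z q w)) \<cdot> ((mid_brd a b p q \<cdot> (iF1 \<otimes> iG1)) \<otimes> \<iota> (z \<odot> w))"
    using types by (simp add: Idn_Tar_comp comp_Tar_Idn comp_assoc)
  finally show ?thesis .
qed

lemma tensor_frobenius2: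
  assumes h: "ob a" "ob b" "ob z" "ob p" "ob q" "ob w"
  "hom B rF1 (a \<odot> b) s" "hom B rF' (a \<odot> s2) u" "hom B iF3 s2 (b \<odot> z)" "hom B iF' u (s \<odot> z)"
  "hom B rG1 (p \<odot> q) t" "hom B rG' (p \<odot> t2) v" "hom B iG3 t2 (q \<odot> w)" "hom B iG' v (t \<odot> w)"
  and eF: "iF' \<cdot> rF' = (rF1 \<otimes> \<iota> z) \<cdot> (\<iota> a \<otimes> iF3)" and eG: "iG' \<cdot> rG' = (rG1 \<otimes> \<iota> w) \<cdot> (\<iota> p \<otimes> iG3)"
  shows "(mid_brd s z t w \<cdot> (iF' \<otimes> iG')) \<cdot> ((rF' \<otimes> rG') \<cdot> mid_brdi a s2 p t2) =
         (((rF1 \<otimes> rG1) \<cdot> mid_brdi a b p q) \<otimes> \<iota> (z \<odot> w)) \<cdot> (\<iota> (a \<odot> p) \<otimes> (mid_brd b z q w \<cdot> (iF3 \<otimes> iG3)))"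
proof -
  note types = h(1-6) h(7-)[THEN homD]
  have mid_nat1: "mid_brd s z t w \<cdot> ((rF1 \<otimes> \<iota> z) \<otimes> (rG1 \<otimes> \<iota> w)) =
      ((rF1 \<otimes> rG1) \<otimes> \<iota> (z \<odot> w)) \<cdot> mid_brd (a \<odot> b) z (p \<odot> q) w"
    using mid_brd_nat[of rF1 "\<iota> z" rG1 "\<iota> w"] types by (simp add: Tar_Idn)
  have mid_nat2: "((\<iota> a \<otimes> iF3) \<otimes> (\<iota> p \<otimes> iG3)) \<cdot> mid_brdi a s2 p t2 =
      mid_brdi a (b \<odot> z) p (q \<odot> w) \<cdot> (\<iota> (a \<odot> p) \<otimes> (iF3 \<otimes> iG3))"
    using mid_brdi_nat[of "\<iota> a" iF3 "\<iota> p" iG3] types by (simp add: Tar_Idn)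
  have mid_coh: "mid_brd (a \<odot> b) z (p \<odot> q) w \<cdot> mid_brdi a (b \<odot> z) p (q \<odot> w) =
      (mid_brdi a b p q \<otimes> \<iota> (z \<odot> w)) \<cdot> (\<iota> (a \<odot> p) \<otimes> mid_brd b z q w)"
    using types by (intro mid_brd_frobenius2) auto
  have "(mid_brd s z t w \<cdot> (iF' \<otimes> iG')) \<cdot> ((rF' \<otimes> rG') \<cdot> mid_brdi a s2 p t2) =
     mid_brd s z t w \<cdot> ((iF' \<otimes> iG') \<cdot> ((rF' \<otimes> rG') \<cdot> mid_brdi a s2 p t2))"
    using types by (simp add: comp_assoc)
  also have "\<dots> = mid_brd s z t w \<cdot> (((iF' \<cdot> rF') \<otimes> (iG' \<cdot> rG')) \<cdot> mid_brdi a s2 p t2)"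
    using types by (intro arg_cong[where f="\<lambda>x. mid_brd s z t w \<cdot> x"] interchange_assoc) simp_all
  also have "\<dots> =
      mid_brd s z t w \<cdot> ((((rF1 \<otimes> \<iota> z) \<cdot> (\<iota> a \<otimes> iF3)) \<otimes> ((rG1 \<otimes> \<iota> w) \<cdot> (\<iota> p \<otimes> iG3))) \<cdot> mid_brdi a s2 p t2)"
    using eF eG by simp
  also have "\<dots> =
      mid_brd s z t w \<cdot> (((rF1 \<otimes> \<iota> z) \<otimes> (rG1 \<otimes> \<iota> w)) \<cdot> (((\<iota> a \<otimes> iF3) \<otimes> (\<iota> p \<otimes> iG3)) \<cdot> mid_brdi a s2 p t2))"
    using types by (intro arg_cong[where f="\<lambda>x. mid_brd s z t w \<cdot> x"] interchange_assoc[symmetric]) simp_all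
  also have "\<dots> =
      ((rF1 \<otimes> rG1) \<otimes> \<iota> (z \<odot> w)) \<cdot> (mid_brd (a \<odot> b) z (p \<odot> q) w \<cdot>
        (((\<iota> a \<otimes> iF3) \<otimes> (\<iota> p \<otimes> iG3)) \<cdot> mid_brdi a s2 p t2))"
    using types by (simp add: comp_eq_extend[OF mid_nat1])
  also have "\<dots> =
      ((rF1 \<otimes> rG1) \<otimes> \<iota> (z \<odot> w)) \<cdot> (mid_brd (a \<odot> b) z (p \<odot> q) w \<cdot>
        (mid_brdi a (b \<odot> z) p (q \<odot> w) \<cdot> (\<iota> (a \<odot> p) \<otimes> (iF3 \<otimes> iG3))))"
    using mid_nat2 by simp
  also have "\<dots> =
      ((rF1 \<otimes> rG1) \<otimes> \<iota> (z \<odot> w)) \<cdot> ((mid_brdi a b p q \<otimes> \<iota> (z \<odot> w)) \<cdot>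
        ((\<iota> (a \<odot> p) \<otimes> mid_brd b z q w) \<cdot> (\<iota> (a \<odot> p) \<otimes> (iF3 \<otimes> iG3))))"
    using types by (simp add: comp_eq_extend[OF mid_coh])
  also have "\<dots> =
      (((rF1 \<otimes> rG1) \<cdot> mid_brdi a b p q) \<otimes> \<iota> (z \<odot> w)) \<cdot> (\<iota> (a \<odot> p) \<otimes> (mid_brd b z q w \<cdot> (iF3 \<otimes> iG3)))"
    using types by (simp add: Idn_Tar_comp comp_Tar_Idn comp_assoc)
  finally show ?thesis .
qed

end

section \<open>Pointwise tensor product of Frobenius monoidal functors\<close>

locale frobenius_functors = strict_braided B for B :: "('bo,'bm) bmoncat" +
  fixes A :: "('ao,'am) moncat"
  assumes strict_A: "strict_monoidal_category A"
begin

lemma monoidal_A: "monoidal_category A"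
  using strict_A unfolding strict_monoidal_category_def by simp

lemma A_ob_Dm[simp]: "f \<in> Ar A \<Longrightarrow> Dm A f \<in> Ob A"
  and A_ob_Cd[simp]: "f \<in> Ar A \<Longrightarrow> Cd A f \<in> Ob A"
  using monoidal_A unfolding monoidal_category_def category_def by simp_all

lemma A_ob_Unt[simp]: "Unt A \<in> Ob A"
  and A_ob_Tob[simp]: "X \<in> Ob A \<Longrightarrow> Y \<in> Ob A \<Longrightarrow> Tob A X Y \<in> Ob A"
  and A_ar_Tar[simp]: "f \<in> Ar A \<Longrightarrow> g \<in> Ar A \<Longrightarrow> Tar A f g \<in> Ar A"
  and A_Dm_Tar[simp]: "f \<in> Ar A \<Longrightarrow> g \<in> Ar A \<Longrightarrow> Dm A (Tar A f g) = Tob A (Dm A f) (Dm A g)"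
  and A_Cd_Tar[simp]: "f \<in> Ar A \<Longrightarrow> g \<in> Ar A \<Longrightarrow> Cd A (Tar A f g) = Tob A (Cd A f) (Cd A g)"
  using monoidal_A unfolding monoidal_category_def hom_def by simp_all

lemma A_Tob_assoc[simp]: "X \<in> Ob A \<Longrightarrow> Y \<in> Ob A \<Longrightarrow> Z \<in> Ob A \<Longrightarrow> Tob A (Tob A X Y) Z = Tob A X (Tob A Y Z)"
  and A_Tob_Unt[simp]: "X \<in> Ob A \<Longrightarrow> Tob A (Unt A) X = X" "X \<in> Ob A \<Longrightarrow> Tob A X (Unt A) = X"
  using strict_A unfolding strict_monoidal_category_def by simp_all

abbreviation frob where "frob F \<equiv> frobenius_monoidal_functor A B F"

abbreviation frob_tensor_B (infixl "\<boxtimes>" 65) where "F \<boxtimes> G \<equiv> frob_tensor B F G"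

lemma frob_functor: "frob F \<Longrightarrow> is_functor A B (FO F) (FM F)"
  and frob_monoidal: "frob F \<Longrightarrow> monoidal_functor A B F"
  and frob_comonoidal: "frob F \<Longrightarrow> comonoidal_functor A B F"
  by (simp_all add: frobenius_monoidal_functor_def monoidal_functor_def)

lemma ob_FO[simp]: "frob F \<Longrightarrow> X \<in> Ob A \<Longrightarrow> ob (FO F X)"
  and ar_FM[simp]: "frob F \<Longrightarrow> f \<in> Ar A \<Longrightarrow> ar (FM F f)"
  and Dm_FM[simp]: "frob F \<Longrightarrow> f \<in> Ar A \<Longrightarrow> dm (FM F f) = FO F (Dm A f)"
  and Cd_FM[simp]: "frob F \<Longrightarrow> f \<in> Ar A \<Longrightarrow> cd (FM F f) = FO F (Cd A f)"
  and FM_Idn: "frob F \<Longrightarrow> X \<in> Ob A \<Longrightarrow> FM F (Idn A X) = \<iota> (FO F X)"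
  and FM_Cmp: "frob F \<Longrightarrow> f \<in> Ar A \<Longrightarrow> g \<in> Ar A \<Longrightarrow> Cd A f = Dm A g \<Longrightarrow>
    FM F (Cmp A g f) = FM F g \<cdot> FM F f"
  using frob_functor unfolding is_functor_def hom_def by simp_all

lemma ar_Fr[simp]: "frob F \<Longrightarrow> X \<in> Ob A \<Longrightarrow> Y \<in> Ob A \<Longrightarrow> ar (Fr F X Y)"
  and Dm_Fr[simp]: "frob F \<Longrightarrow> X \<in> Ob A \<Longrightarrow> Y \<in> Ob A \<Longrightarrow> dm (Fr F X Y) = FO F X \<odot> FO F Y"
  and Cd_Fr[simp]: "frob F \<Longrightarrow> X \<in> Ob A \<Longrightarrow> Y \<in> Ob A \<Longrightarrow> cd (Fr F X Y) = FO F (Tob A X Y)"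
  and ar_Fr0[simp]: "frob F \<Longrightarrow> ar (Fr0 F)"
  and Dm_Fr0[simp]: "frob F \<Longrightarrow> dm (Fr0 F) = \<one>"
  and Cd_Fr0[simp]: "frob F \<Longrightarrow> cd (Fr0 F) = FO F (Unt A)"
  and Fr_nat: "frob F \<Longrightarrow> f \<in> Ar A \<Longrightarrow> g \<in> Ar A \<Longrightarrow>
    Fr F (Cd A f) (Cd A g) \<cdot> (FM F f \<otimes> FM F g) = FM F (Tar A f g) \<cdot> Fr F (Dm A f) (Dm A g)"
  and Fr_assoc: "frob F \<Longrightarrow> X \<in> Ob A \<Longrightarrow> Y \<in> Ob A \<Longrightarrow> Z \<in> Ob A \<Longrightarrow>
    Fr F (Tob A X Y) Z \<cdot> (Fr F X Y \<otimes> \<iota> (FO F Z)) = Fr F X (Tob A Y Z) \<cdot> (\<iota> (FO F X) \<otimes> Fr F Y Z)"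
  and Fr_unit: "frob F \<Longrightarrow> X \<in> Ob A \<Longrightarrow> Fr F (Unt A) X \<cdot> (Fr0 F \<otimes> \<iota> (FO F X)) = \<iota> (FO F X)"
    "frob F \<Longrightarrow> X \<in> Ob A \<Longrightarrow> Fr F X (Unt A) \<cdot> (\<iota> (FO F X) \<otimes> Fr0 F) = \<iota> (FO F X)"
  using frob_monoidal unfolding monoidal_functor_def hom_def by simp_all

lemma ar_Fi[simp]: "frob F \<Longrightarrow> X \<in> Ob A \<Longrightarrow> Y \<in> Ob A \<Longrightarrow> ar (Fi F X Y)"
  and Dm_Fi[simp]: "frob F \<Longrightarrow> X \<in> Ob A \<Longrightarrow> Y \<in> Ob A \<Longrightarrow> dm (Fi F X Y) = FO F (Tob A X Y)"
  and Cd_Fi[simp]: "frob F \<Longrightarrow> X \<in> Ob A \<Longrightarrow> Y \<in> Ob A \<Longrightarrow> cd (Fi F X Y) = FO F X \<odot> FO F Y"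
  and ar_Fi0[simp]: "frob F \<Longrightarrow> ar (Fi0 F)"
  and Dm_Fi0[simp]: "frob F \<Longrightarrow> dm (Fi0 F) = FO F (Unt A)"
  and Cd_Fi0[simp]: "frob F \<Longrightarrow> cd (Fi0 F) = \<one>"
  and Fi_nat: "frob F \<Longrightarrow> f \<in> Ar A \<Longrightarrow> g \<in> Ar A \<Longrightarrow>
    (FM F f \<otimes> FM F g) \<cdot> Fi F (Dm A f) (Dm A g) = Fi F (Cd A f) (Cd A g) \<cdot> FM F (Tar A f g)"
  and Fi_coassoc: "frob F \<Longrightarrow> X \<in> Ob A \<Longrightarrow> Y \<in> Ob A \<Longrightarrow> Z \<in> Ob A \<Longrightarrow>
    (Fi F X Y \<otimes> \<iota> (FO F Z)) \<cdot> Fi F (Tob A X Y) Z = (\<iota> (FO F X) \<otimes> Fi F Y Z) \<cdot> Fi F X (Tob A Y Z)"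
  and Fi_counit: "frob F \<Longrightarrow> X \<in> Ob A \<Longrightarrow> (Fi0 F \<otimes> \<iota> (FO F X)) \<cdot> Fi F (Unt A) X = \<iota> (FO F X)"
    "frob F \<Longrightarrow> X \<in> Ob A \<Longrightarrow> (\<iota> (FO F X) \<otimes> Fi0 F) \<cdot> Fi F X (Unt A) = \<iota> (FO F X)"
  using frob_comonoidal unfolding comonoidal_functor_def hom_def by simp_all

lemma Fr_Fi_frobenius: "frob F \<Longrightarrow> X \<in> Ob A \<Longrightarrow> Y \<in> Ob A \<Longrightarrow> Z \<in> Ob A \<Longrightarrow>
    Fi F X (Tob A Y Z) \<cdot> Fr F (Tob A X Y) Z = (\<iota> (FO F X) \<otimes> Fr F Y Z) \<cdot> (Fi F X Y \<otimes> \<iota> (FO F Z))"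
  "frob F \<Longrightarrow> X \<in> Ob A \<Longrightarrow> Y \<in> Ob A \<Longrightarrow> Z \<in> Ob A \<Longrightarrow>
    Fi F (Tob A X Y) Z \<cdot> Fr F X (Tob A Y Z) = (Fr F X Y \<otimes> \<iota> (FO F Z)) \<cdot> (\<iota> (FO F X) \<otimes> Fi F Y Z)"
  unfolding frobenius_monoidal_functor_def by simp_all

lemma frob_tensor_simps:
  "FO (F \<boxtimes> G) X = FO F X \<odot> FO G X"
  "FM (F \<boxtimes> G) f = FM F f \<otimes> FM G f"
  "Fr (F \<boxtimes> G) X Y = (Fr F X Y \<otimes> Fr G X Y) \<cdot> mid_brdi (FO F X) (FO F Y) (FO G X) (FO G Y)"
  "Fr0 (F \<boxtimes> G) = Fr0 F \<otimes> Fr0 G"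
  "Fi (F \<boxtimes> G) X Y = mid_brd (FO F X) (FO F Y) (FO G X) (FO G Y) \<cdot> (Fi F X Y \<otimes> Fi G X Y)"
  "Fi0 (F \<boxtimes> G) = Fi0 F \<otimes> Fi0 G"
  by (simp_all add: frob_tensor_def)

lemma frob_tensor_functor:
  assumes "frob F" "frob G"
  shows "is_functor A B (FO (F \<boxtimes> G)) (FM (F \<boxtimes> G))"
  using assms unfolding is_functor_def frob_tensor_simps
  by (simp add: hom_def FM_Idn FM_Cmp Tar_Idn interchange)

lemma frob_tensor_monoidal:
  assumes F: "frob F" and G: "frob G"
  shows "monoidal_functor A B (F \<boxtimes> G)"
  unfolding monoidal_functor_def
proof (intro conjI ballI)
  fix f g assume fg: "f \<in> Ar A" "g \<in> Ar A"
  show "Fr (F \<boxtimes> G) (Cd A f) (Cd A g) \<cdot> (FM (F \<boxtimes> G) f \<otimes> FM (F \<boxtimes> G) g) =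
        FM (F \<boxtimes> G) (Tar A f g) \<cdot> Fr (F \<boxtimes> G) (Dm A f) (Dm A g)"
    unfolding frob_tensor_simps
    by (rule tensor_r_nat[where u = "FO F (Tob A (Dm A f) (Dm A g))" and u' = "FO F (Tob A (Cd A f) (Cd A g))"
          and v = "FO G (Tob A (Dm A f) (Dm A g))" and v' = "FO G (Tob A (Cd A f) (Cd A g))"])
      (use F G fg in \<open>simp_all add: hom_def Fr_nat\<close>)
next
  fix X Y Z assume XYZ: "X \<in> Ob A" "Y \<in> Ob A" "Z \<in> Ob A"
  show "Fr (F \<boxtimes> G) (Tob A X Y) Z \<cdot> (Fr (F \<boxtimes> G) X Y \<otimes> \<iota> (FO (F \<boxtimes> G) Z)) =
        Fr (F \<boxtimes> G) X (Tob A Y Z) \<cdot> (\<iota> (FO (F \<boxtimes> G) X) \<otimes> Fr (F \<boxtimes> G) Y Z)"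
    unfolding frob_tensor_simps
    by (rule tensor_r_assoc[where u = "FO F (Tob A X (Tob A Y Z))" and v = "FO G (Tob A X (Tob A Y Z))"])
      (use F G XYZ in \<open>simp_all add: hom_def Fr_assoc\<close>)
next
  fix X assume X: "X \<in> Ob A"
  show "Fr (F \<boxtimes> G) (Unt A) X \<cdot> (Fr0 (F \<boxtimes> G) \<otimes> \<iota> (FO (F \<boxtimes> G) X)) = \<iota> (FO (F \<boxtimes> G) X)"
    unfolding frob_tensor_simps
    by (rule tensor_r_unit_left) (use F G X in \<open>simp_all add: hom_def Fr_unit\<close>)
  show "Fr (F \<boxtimes> G) X (Unt A) \<cdot> (\<iota> (FO (F \<boxtimes> G) X) \<otimes> Fr0 (F \<boxtimes> G)) = \<iota> (FO (F \<boxtimes> G) X)"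
    unfolding frob_tensor_simps
    by (rule tensor_r_unit_right) (use F G X in \<open>simp_all add: hom_def Fr_unit\<close>)
qed (use F G frob_tensor_functor in \<open>simp_all add: hom_def frob_tensor_simps\<close>)

lemma frob_tensor_comonoidal:
  assumes F: "frob F" and G: "frob G"
  shows "comonoidal_functor A B (F \<boxtimes> G)"
  unfolding comonoidal_functor_def
proof (intro conjI ballI)
  fix f g assume fg: "f \<in> Ar A" "g \<in> Ar A"
  show "(FM (F \<boxtimes> G) f \<otimes> FM (F \<boxtimes> G) g) \<cdot> Fi (F \<boxtimes> G) (Dm A f) (Dm A g) =
        Fi (F \<boxtimes> G) (Cd A f) (Cd A g) \<cdot> FM (F \<boxtimes> G) (Tar A f g)"
    unfolding frob_tensor_simps
    by (rule tensor_i_nat[where u = "FO F (Tob A (Dm A f) (Dm A g))" and u' = "FO F (Tob A (Cd A f) (Cd A g))"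
          and v = "FO G (Tob A (Dm A f) (Dm A g))" and v' = "FO G (Tob A (Cd A f) (Cd A g))"])
      (use F G fg in \<open>simp_all add: hom_def Fi_nat\<close>)
next
  fix X Y Z assume XYZ: "X \<in> Ob A" "Y \<in> Ob A" "Z \<in> Ob A"
  show "(Fi (F \<boxtimes> G) X Y \<otimes> \<iota> (FO (F \<boxtimes> G) Z)) \<cdot> Fi (F \<boxtimes> G) (Tob A X Y) Z =
        (\<iota> (FO (F \<boxtimes> G) X) \<otimes> Fi (F \<boxtimes> G) Y Z) \<cdot> Fi (F \<boxtimes> G) X (Tob A Y Z)"
    unfolding frob_tensor_simps
    by (rule tensor_i_coassoc[where u = "FO F (Tob A X (Tob A Y Z))" and v = "FO G (Tob A X (Tob A Y Z))"])
      (use F G XYZ in \<open>simp_all add: hom_def Fi_coassoc\<close>)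
next
  fix X assume X: "X \<in> Ob A"
  show "(Fi0 (F \<boxtimes> G) \<otimes> \<iota> (FO (F \<boxtimes> G) X)) \<cdot> Fi (F \<boxtimes> G) (Unt A) X = \<iota> (FO (F \<boxtimes> G) X)"
    unfolding frob_tensor_simps
    by (rule tensor_i_counit_left) (use F G X in \<open>simp_all add: hom_def Fi_counit\<close>)
  show "(\<iota> (FO (F \<boxtimes> G) X) \<otimes> Fi0 (F \<boxtimes> G)) \<cdot> Fi (F \<boxtimes> G) X (Unt A) = \<iota> (FO (F \<boxtimes> G) X)"
    unfolding frob_tensor_simps
    by (rule tensor_i_counit_right) (use F G X in \<open>simp_all add: hom_def Fi_counit\<close>)
qed (use F G frob_tensor_functor in \<open>simp_all add: hom_def frob_tensor_simps\<close>)

lemma frob_tensor_frobenius: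
  assumes F: "frob F" and G: "frob G"
  shows "frob (F \<boxtimes> G)"
  unfolding frobenius_monoidal_functor_def
proof (intro conjI ballI)
  fix X Y Z assume XYZ: "X \<in> Ob A" "Y \<in> Ob A" "Z \<in> Ob A"
  show "Fi (F \<boxtimes> G) X (Tob A Y Z) \<cdot> Fr (F \<boxtimes> G) (Tob A X Y) Z =
        (\<iota> (FO (F \<boxtimes> G) X) \<otimes> Fr (F \<boxtimes> G) Y Z) \<cdot> (Fi (F \<boxtimes> G) X Y \<otimes> \<iota> (FO (F \<boxtimes> G) Z))"
    unfolding frob_tensor_simps
    by (rule tensor_frobenius1[where u = "FO F (Tob A X (Tob A Y Z))" and v = "FO G (Tob A X (Tob A Y Z))"])
      (use F G XYZ in \<open>simp_all add: hom_def Fr_Fi_frobenius\<close>)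
  show "Fi (F \<boxtimes> G) (Tob A X Y) Z \<cdot> Fr (F \<boxtimes> G) X (Tob A Y Z) =
        (Fr (F \<boxtimes> G) X Y \<otimes> \<iota> (FO (F \<boxtimes> G) Z)) \<cdot> (\<iota> (FO (F \<boxtimes> G) X) \<otimes> Fi (F \<boxtimes> G) Y Z)"
    unfolding frob_tensor_simps
    by (rule tensor_frobenius2[where u = "FO F (Tob A X (Tob A Y Z))" and v = "FO G (Tob A X (Tob A Y Z))"])
      (use F G XYZ in \<open>simp_all add: hom_def Fr_Fi_frobenius\<close>)
qed (use F G frob_tensor_monoidal frob_tensor_comonoidal in simp_all)

lemma frob_unit_simps:
  "FO (frob_unit B) X = \<one>" "FM (frob_unit B) f = \<iota> \<one>" "Fr (frob_unit B) X Y = \<iota> \<one>"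
  "Fr0 (frob_unit B) = \<iota> \<one>" "Fi (frob_unit B) X Y = \<iota> \<one>" "Fi0 (frob_unit B) = \<iota> \<one>"
  by (simp_all add: frob_unit_def)

lemma frob_unit_frobenius: "frob (frob_unit B)"
  unfolding frobenius_monoidal_functor_def monoidal_functor_def comonoidal_functor_def is_functor_def
    frob_unit_simps
  by (simp add: hom_def Tar_Idn)

lemma ar_nat_trans[simp]:
  "nat_trans A B F G \<eta> \<Longrightarrow> X \<in> Ob A \<Longrightarrow> ar (\<eta> X)"
  "nat_trans A B F G \<eta> \<Longrightarrow> X \<in> Ob A \<Longrightarrow> dm (\<eta> X) = FO F X"
  "nat_trans A B F G \<eta> \<Longrightarrow> X \<in> Ob A \<Longrightarrow> cd (\<eta> X) = FO G X"
  unfolding nat_trans_def hom_def by simp_all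

lemma nat_trans_undefined: "nat_trans A B F G \<eta> \<Longrightarrow> X \<notin> Ob A \<Longrightarrow> \<eta> X = undefined"
  unfolding nat_trans_def by simp

lemma nat_trans_natural:
  "nat_trans A B F G \<eta> \<Longrightarrow> f \<in> Ar A \<Longrightarrow> FM G f \<cdot> \<eta> (Dm A f) = \<eta> (Cd A f) \<cdot> FM F f"
  unfolding nat_trans_def by simp

lemma nat_transI:
  assumes "\<And>X. X \<in> Ob A \<Longrightarrow> ar (\<eta> X) \<and> dm (\<eta> X) = FO F X \<and> cd (\<eta> X) = FO G X"
    and "\<And>f. f \<in> Ar A \<Longrightarrow> FM G f \<cdot> \<eta> (Dm A f) = \<eta> (Cd A f) \<cdot> FM F f"
  shows "nat_trans A B F G (\<lambda>X. if X \<in> Ob A then \<eta> X else undefined)"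
  using assms unfolding nat_trans_def hom_def by auto

lemma nat_trans_Idn: "frob F \<Longrightarrow> nat_trans A B F F (\<lambda>X. if X \<in> Ob A then \<iota> (FO F X) else undefined)"
  by (rule nat_transI) auto

lemma nat_trans_comp:
  assumes \<eta>: "nat_trans A B F G \<eta>" and \<theta>: "nat_trans A B G H \<theta>" and "frob F" "frob G" "frob H"
  shows "nat_trans A B F H (\<lambda>X. if X \<in> Ob A then \<theta> X \<cdot> \<eta> X else undefined)"
proof (rule nat_transI)
  fix f assume f: "f \<in> Ar A"
  have "FM H f \<cdot> \<theta> (Dm A f) \<cdot> \<eta> (Dm A f) = \<theta> (Cd A f) \<cdot> FM G f \<cdot> \<eta> (Dm A f)"
    using assms f by (simp add: comp_eq_extend[OF nat_trans_natural[OF \<theta> f]])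
  also have "\<dots> = \<theta> (Cd A f) \<cdot> \<eta> (Cd A f) \<cdot> FM F f"
    using nat_trans_natural[OF \<eta> f] by simp
  finally show "FM H f \<cdot> \<theta> (Dm A f) \<cdot> \<eta> (Dm A f) = (\<theta> (Cd A f) \<cdot> \<eta> (Cd A f)) \<cdot> FM F f"
    using assms f by (simp add: comp_assoc)
qed (use assms in auto)

lemma nat_trans_tensor:
  assumes "nat_trans A B F G \<eta>" "nat_trans A B F' G' \<eta>'" "frob F" "frob G" "frob F'" "frob G'"
  shows "nat_trans A B (F \<boxtimes> F') (G \<boxtimes> G')
    (\<lambda>X. if X \<in> Ob A then \<eta> X \<otimes> \<eta>' X else undefined)"
  using assms by (intro nat_transI) (auto simp: frob_tensor_simps interchange[symmetric] nat_trans_natural)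

section \<open>The category of Frobenius monoidal functors\<close>

abbreviation Frob where "Frob \<equiv> FrobCat A B"

lemma Ob_Frob: "Ob Frob = {F. frob F}"
  and in_Ar_Frob: "(F, G, \<eta>) \<in> Ar Frob \<longleftrightarrow> frob F \<and> frob G \<and> nat_trans A B F G \<eta>"
  and Dm_Frob[simp]: "Dm Frob (F, G, \<eta>) = F"
  and Cd_Frob[simp]: "Cd Frob (F, G, \<eta>) = G"
  and Idn_Frob: "Idn Frob F = (F, F, \<lambda>X. if X \<in> Ob A then \<iota> (FO F X) else undefined)"
  and Cmp_Frob[simp]: "Cmp Frob (G, H, \<theta>) (F, G', \<eta>) =
    (F, H, \<lambda>X. if X \<in> Ob A then \<theta> X \<cdot> \<eta> X else undefined)"
  and Tob_Frob: "Tob Frob = frob_tensor B"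
  and Tar_Frob[simp]: "Tar Frob (F, G, \<eta>) (F', G', \<eta>') =
    (F \<boxtimes> F', G \<boxtimes> G', \<lambda>X. if X \<in> Ob A then \<eta> X \<otimes> \<eta>' X else undefined)"
  and Unt_Frob: "Unt Frob = frob_unit B"
  and Asc_Frob: "Asc Frob F G H = ((F \<boxtimes> G) \<boxtimes> H, F \<boxtimes> (G \<boxtimes> H),
    \<lambda>X. if X \<in> Ob A then \<iota> (FO F X \<odot> FO G X \<odot> FO H X) else undefined)"
  and Lu_Frob: "Lu Frob F = ((frob_unit B) \<boxtimes> F, F, \<lambda>X. if X \<in> Ob A then \<iota> (FO F X) else undefined)"
  and Ru_Frob: "Ru Frob F = (F \<boxtimes> (frob_unit B), F, \<lambda>X. if X \<in> Ob A then \<iota> (FO F X) else undefined)"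
  and Brd_Frob: "Brd Frob F G = (F \<boxtimes> G, G \<boxtimes> F,
    \<lambda>X. if X \<in> Ob A then \<sigma> (FO F X) (FO G X) else undefined)"
  by (simp_all add: FrobCat_def)

lemma Frob_ArE:
  assumes "x \<in> Ar Frob"
  obtains F G \<eta> where "x = (F, G, \<eta>)" "frob F" "frob G" "nat_trans A B F G \<eta>"
  using assms by (auto simp: FrobCat_def)

lemma category_Frob: "category Frob"
  unfolding category_def
proof (intro conjI ballI impI)
  fix f assume "f \<in> Ar Frob"
  then obtain F G \<eta> where f: "f = (F, G, \<eta>)" "frob F" "frob G" "nat_trans A B F G \<eta>"
    by (rule Frob_ArE)
  show "Dm Frob f \<in> Ob Frob" "Cd Frob f \<in> Ob Frob" using f by (simp_all add: Ob_Frob)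
  show "Cmp Frob (Idn Frob (Cd Frob f)) f = f" "Cmp Frob f (Idn Frob (Dm Frob f)) = f"
    using f by (auto simp: Idn_Frob nat_trans_undefined intro!: ext)
next
  fix F assume "F \<in> Ob Frob"
  then show "Idn Frob F \<in> Ar Frob" "Dm Frob (Idn Frob F) = F" "Cd Frob (Idn Frob F) = F"
    using nat_trans_Idn by (simp_all add: Ob_Frob Idn_Frob in_Ar_Frob)
next
  fix f g assume "f \<in> Ar Frob" "g \<in> Ar Frob" "Cd Frob f = Dm Frob g"
  then obtain F G \<eta> H \<theta> where "f = (F, G, \<eta>)" "frob F" "frob G" "nat_trans A B F G \<eta>"
    and "g = (G, H, \<theta>)" "frob H" "nat_trans A B G H \<theta>"
    by (metis Frob_ArE Cd_Frob Dm_Frob)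
  then show "Cmp Frob g f \<in> Ar Frob" "Dm Frob (Cmp Frob g f) = Dm Frob f" "Cd Frob (Cmp Frob g f) = Cd Frob g"
    using nat_trans_comp[of F G \<eta> H \<theta>] by (simp_all add: in_Ar_Frob)
next
  fix f g h assume "f \<in> Ar Frob" "g \<in> Ar Frob" "h \<in> Ar Frob" "Cd Frob f = Dm Frob g" "Cd Frob g = Dm Frob h"
  then obtain F G \<eta> H \<theta> K \<kappa> where "f = (F, G, \<eta>)" "frob F" "frob G" "nat_trans A B F G \<eta>"
    and "g = (G, H, \<theta>)" "frob H" "nat_trans A B G H \<theta>"
    and "h = (H, K, \<kappa>)" "frob K" "nat_trans A B H K \<kappa>"
    by (metis Frob_ArE Cd_Frob Dm_Frob)
  then show "Cmp Frob h (Cmp Frob g f) = Cmp Frob (Cmp Frob h g) f"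
    by (auto simp: comp_assoc intro!: ext)
qed

definition ident_trans where
  "ident_trans F G = (F, G, \<lambda>X. if X \<in> Ob A then \<iota> (FO F X) else undefined)"

lemma ident_trans_Ar:
  assumes "frob F" "frob G" "\<And>X. X \<in> Ob A \<Longrightarrow> FO F X = FO G X" "\<And>f. f \<in> Ar A \<Longrightarrow> FM F f = FM G f"
  shows "ident_trans F G \<in> Ar Frob"
proof -
  have "nat_trans A B F G (\<lambda>X. if X \<in> Ob A then \<iota> (FO F X) else undefined)"
  proof (rule nat_transI)
    fix X assume "X \<in> Ob A"
    then show "ar (\<iota> (FO F X)) \<and> dm (\<iota> (FO F X)) = FO F X \<and> cd (\<iota> (FO F X)) = FO G X"
      using assms by simp
  next
    fix f assume "f \<in> Ar A"
    then show "FM G f \<cdot> \<iota> (FO F (Dm A f)) = \<iota> (FO F (Cd A f)) \<cdot> FM F f"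
      using assms by simp
  qed
  then show ?thesis using assms unfolding ident_trans_def in_Ar_Frob by simp
qed

lemma ident_trans_iso:
  assumes "frob F" "frob G" "\<And>X. X \<in> Ob A \<Longrightarrow> FO F X = FO G X" "\<And>f. f \<in> Ar A \<Longrightarrow> FM F f = FM G f"
  shows "iso Frob (ident_trans F G)" "cinv Frob (ident_trans F G) = ident_trans G F"
proof -
  have "ident_trans G F \<in> Ar Frob" using assms by (intro ident_trans_Ar) auto
  then have "is_inverse Frob (ident_trans F G) (ident_trans G F)"
    unfolding is_inverse_def using assms by (auto simp: ident_trans_def Idn_Frob intro!: ext)
  then show "iso Frob (ident_trans F G)" "cinv Frob (ident_trans F G) = ident_trans G F"
    using ident_trans_Ar[OF assms] cinv_eqI[OF category_Frob] unfolding iso_def by blast+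
qed

lemma Asc_Frob_ident_trans: "frob F \<Longrightarrow> frob G \<Longrightarrow> frob H \<Longrightarrow>
  Asc Frob F G H = ident_trans ((F \<boxtimes> G) \<boxtimes> H) (F \<boxtimes> (G \<boxtimes> H))"
  and Lu_Frob_ident_trans: "frob F \<Longrightarrow> Lu Frob F = ident_trans (frob_unit B \<boxtimes> F) F"
  and Ru_Frob_ident_trans: "frob F \<Longrightarrow> Ru Frob F = ident_trans (F \<boxtimes> frob_unit B) F"
  by (auto simp: Asc_Frob Lu_Frob Ru_Frob ident_trans_def frob_tensor_simps frob_unit_simps intro!: ext)

lemma iso_Asc_Frob: "frob F \<Longrightarrow> frob G \<Longrightarrow> frob H \<Longrightarrow> iso Frob (Asc Frob F G H)"
  and cinv_Asc_Frob: "frob F \<Longrightarrow> frob G \<Longrightarrow> frob H \<Longrightarrow> cinv Frob (Asc Frob F G H) =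
    ident_trans (F \<boxtimes> (G \<boxtimes> H)) ((F \<boxtimes> G) \<boxtimes> H)"
  unfolding Asc_Frob_ident_trans
  by (intro ident_trans_iso; auto simp: frob_tensor_frobenius frob_tensor_simps Tar_assoc)+

lemma iso_Lu_Frob: "frob F \<Longrightarrow> iso Frob (Lu Frob F)"
  and iso_Ru_Frob: "frob F \<Longrightarrow> iso Frob (Ru Frob F)"
  unfolding Lu_Frob_ident_trans Ru_Frob_ident_trans
  by (intro ident_trans_iso;
      auto simp: frob_tensor_frobenius frob_unit_frobenius frob_tensor_simps frob_unit_simps Tar_Idn_Unt)+

lemma Tar_Frob_in_hom: "f \<in> Ar Frob \<Longrightarrow> g \<in> Ar Frob \<Longrightarrow>
  hom Frob (Tar Frob f g) (Tob Frob (Dm Frob f) (Dm Frob g)) (Tob Frob (Cd Frob f) (Cd Frob g))"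
  by (elim Frob_ArE) (simp add: hom_def in_Ar_Frob Tob_Frob frob_tensor_frobenius nat_trans_tensor)

lemma Tar_Frob_Idn: "F \<in> Ob Frob \<Longrightarrow> G \<in> Ob Frob \<Longrightarrow>
  Tar Frob (Idn Frob F) (Idn Frob G) = Idn Frob (Tob Frob F G)"
  by (auto simp: Ob_Frob Idn_Frob Tob_Frob frob_tensor_simps Tar_Idn intro!: ext)

lemma Tar_Frob_Cmp: "f \<in> Ar Frob \<Longrightarrow> g \<in> Ar Frob \<Longrightarrow> f' \<in> Ar Frob \<Longrightarrow> g' \<in> Ar Frob \<Longrightarrow>
  Cd Frob f = Dm Frob g \<Longrightarrow> Cd Frob f' = Dm Frob g' \<Longrightarrow>
  Tar Frob (Cmp Frob g f) (Cmp Frob g' f') = Cmp Frob (Tar Frob g g') (Tar Frob f f')"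
  by (elim Frob_ArE) (auto simp: interchange intro!: ext)

lemma Asc_Frob_natural: "f \<in> Ar Frob \<Longrightarrow> g \<in> Ar Frob \<Longrightarrow> h \<in> Ar Frob \<Longrightarrow>
  Cmp Frob (Asc Frob (Cd Frob f) (Cd Frob g) (Cd Frob h)) (Tar Frob (Tar Frob f g) h) =
  Cmp Frob (Tar Frob f (Tar Frob g h)) (Asc Frob (Dm Frob f) (Dm Frob g) (Dm Frob h))"
  by (elim Frob_ArE) (auto simp: Asc_Frob Tar_assoc intro!: ext)

lemma Lu_Frob_natural: "f \<in> Ar Frob \<Longrightarrow>
  Cmp Frob (Lu Frob (Cd Frob f)) (Tar Frob (Idn Frob (Unt Frob)) f) = Cmp Frob f (Lu Frob (Dm Frob f))"
  and Ru_Frob_natural: "f \<in> Ar Frob \<Longrightarrow>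
  Cmp Frob (Ru Frob (Cd Frob f)) (Tar Frob f (Idn Frob (Unt Frob))) = Cmp Frob f (Ru Frob (Dm Frob f))"
  by (elim Frob_ArE; auto simp: Lu_Frob Ru_Frob Idn_Frob Unt_Frob frob_unit_simps Tar_Idn_Unt intro!: ext)+

lemma pentagon_Frob: "W \<in> Ob Frob \<Longrightarrow> X \<in> Ob Frob \<Longrightarrow> Y \<in> Ob Frob \<Longrightarrow> Z \<in> Ob Frob \<Longrightarrow>
  Cmp Frob (Asc Frob W X (Tob Frob Y Z)) (Asc Frob (Tob Frob W X) Y Z) =
  Cmp Frob (Tar Frob (Idn Frob W) (Asc Frob X Y Z))
    (Cmp Frob (Asc Frob W (Tob Frob X Y) Z) (Tar Frob (Asc Frob W X Y) (Idn Frob Z)))"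
  by (auto simp: Ob_Frob Asc_Frob Idn_Frob Tob_Frob frob_tensor_simps Tar_Idn intro!: ext)

lemma triangle_Frob: "X \<in> Ob Frob \<Longrightarrow> Y \<in> Ob Frob \<Longrightarrow>
  Cmp Frob (Tar Frob (Idn Frob X) (Lu Frob Y)) (Asc Frob X (Unt Frob) Y) =
  Tar Frob (Ru Frob X) (Idn Frob Y)"
  by (auto simp: Ob_Frob Asc_Frob Idn_Frob Lu_Frob Ru_Frob Unt_Frob frob_tensor_simps frob_unit_simps Tar_Idn
      intro!: ext)

lemma monoidal_Frob: "monoidal_category Frob"
  unfolding monoidal_category_def
proof (intro conjI ballI impI)
  fix F G H assume "F \<in> Ob Frob" "G \<in> Ob Frob" "H \<in> Ob Frob"
  then show "iso Frob (Asc Frob F G H)"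
    "hom Frob (Asc Frob F G H) (Tob Frob (Tob Frob F G) H) (Tob Frob F (Tob Frob G H))"
    using iso_Asc_Frob by (auto simp: Ob_Frob hom_def iso_def Asc_Frob Tob_Frob)
next
  fix F assume "F \<in> Ob Frob"
  then show "iso Frob (Lu Frob F)" "hom Frob (Lu Frob F) (Tob Frob (Unt Frob) F) F"
    "iso Frob (Ru Frob F)" "hom Frob (Ru Frob F) (Tob Frob F (Unt Frob)) F"
    using iso_Lu_Frob iso_Ru_Frob by (auto simp: Ob_Frob hom_def iso_def Lu_Frob Ru_Frob Tob_Frob Unt_Frob)
qed (simp_all add: category_Frob Tar_Frob_in_hom Tar_Frob_Idn Tar_Frob_Cmp Asc_Frob_natural
    Lu_Frob_natural Ru_Frob_natural pentagon_Frob triangle_Frob,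
    simp_all add: Unt_Frob Ob_Frob Tob_Frob frob_unit_frobenius frob_tensor_frobenius)

lemma Brd_Frob_in_hom: "F \<in> Ob Frob \<Longrightarrow> G \<in> Ob Frob \<Longrightarrow>
  hom Frob (Brd Frob F G) (Tob Frob F G) (Tob Frob G F)"
  by (auto simp: hom_def Ob_Frob Tob_Frob Brd_Frob in_Ar_Frob frob_tensor_frobenius frob_tensor_simps brd_nat
      intro!: nat_transI)

lemma iso_Brd_Frob:
  assumes "F \<in> Ob Frob" "G \<in> Ob Frob"
  shows "iso Frob (Brd Frob F G)"
proof -
  let ?g = "(G \<boxtimes> F, F \<boxtimes> G, \<lambda>X. if X \<in> Ob A then \<tau> (FO F X) (FO G X) else undefined)"
  have "?g \<in> Ar Frob"
    using assms by (auto simp: Ob_Frob in_Ar_Frob frob_tensor_frobenius frob_tensor_simps brdi_nat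
        intro!: nat_transI)
  then have "is_inverse Frob (Brd Frob F G) ?g"
    using assms unfolding is_inverse_def
    by (auto simp: Ob_Frob Brd_Frob Idn_Frob frob_tensor_simps Tar_Idn brdi_brd brd_brdi intro!: ext)
  then show ?thesis using Brd_Frob_in_hom[OF assms] unfolding iso_def hom_def by blast
qed

lemma Brd_Frob_natural: "f \<in> Ar Frob \<Longrightarrow> g \<in> Ar Frob \<Longrightarrow>
  Cmp Frob (Brd Frob (Cd Frob f) (Cd Frob g)) (Tar Frob f g) =
  Cmp Frob (Tar Frob g f) (Brd Frob (Dm Frob f) (Dm Frob g))"
  by (elim Frob_ArE) (auto simp: Brd_Frob brd_nat intro!: ext)

lemma Brd_Frob_hexagon_right: "F \<in> Ob Frob \<Longrightarrow> G \<in> Ob Frob \<Longrightarrow> H \<in> Ob Frob \<Longrightarrow>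
  Cmp Frob (Asc Frob G H F) (Cmp Frob (Brd Frob F (Tob Frob G H)) (Asc Frob F G H)) =
  Cmp Frob (Tar Frob (Idn Frob G) (Brd Frob F H))
    (Cmp Frob (Asc Frob G F H) (Tar Frob (Brd Frob F G) (Idn Frob H)))"
  by (auto simp: Ob_Frob Asc_Frob Brd_Frob Idn_Frob Tob_Frob frob_tensor_simps brd_Tob_right intro!: ext)

lemma Brd_Frob_hexagon_left: "F \<in> Ob Frob \<Longrightarrow> G \<in> Ob Frob \<Longrightarrow> H \<in> Ob Frob \<Longrightarrow>
  Cmp Frob (cinv Frob (Asc Frob H F G)) (Cmp Frob (Brd Frob (Tob Frob F G) H) (cinv Frob (Asc Frob F G H))) =
  Cmp Frob (Tar Frob (Brd Frob F H) (Idn Frob G))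
    (Cmp Frob (cinv Frob (Asc Frob F H G)) (Tar Frob (Idn Frob F) (Brd Frob G H)))"
  by (auto simp: Ob_Frob cinv_Asc_Frob ident_trans_def Brd_Frob Idn_Frob Tob_Frob frob_tensor_simps
      brd_Tob_left intro!: ext)

lemma braided_Frob: "braided_monoidal_category Frob"
  unfolding braided_monoidal_category_def
  by (simp add: monoidal_Frob iso_Brd_Frob Brd_Frob_in_hom Brd_Frob_natural Brd_Frob_hexagon_right
      Brd_Frob_hexagon_left)

end

theorem mainTheorem5:
  fixes A :: "('ao,'am) moncat" and B :: "('bo,'bm) bmoncat"
  assumes "strict_monoidal_category A"
    and "strict_braided_monoidal_category B"
  shows "(\<forall>F G. frobenius_monoidal_functor A B F \<longrightarrow> frobenius_monoidal_functor A B G \<longrightarrow>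
            frobenius_monoidal_functor A B (frob_tensor B F G))
         \<and> braided_monoidal_category (FrobCat A B)"
proof -
  interpret frobenius_functors B A
    using assms by unfold_locales
  show ?thesis using frob_tensor_frobenius braided_Frob by blast
qed

end
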